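(* Let $d\ge 3$ be fixed and let $\{G_k\}$ be a family of connected $d$-regular simple graphs with $|V(G_k)|\to\infty$ as $k\to\infty$. Then \[ \lim_{k\to\infty}\frac{\mathscr{K}_{nb}(G_k)}{\mathscr{K}_e(G_k)}\le 1-\frac{1}{d^2}. \]
   Context: Kemeny's constant of an irreducible finite Markov chain with transition matrix $P$ whose eigenvalues (with multiplicity) are $1=\rho_1,\rho_2,\dots,\rho_N$ (with $1$ simple) is $\mathscr{K}(P)=\sum_{i=2}^{N}\frac{1}{1-\rho_i}$. Arcs of $G$: for each edge $\{u,v\}$ the two ordered pairs $(u,v),(v,u)$. $\mathscr{K}_e(G)$ is Kemeny's constant of the chain on arcs where from $(u,v)$ one moves to $(v,w)$ with probability $1/\deg(v)$ for each neighbor $w$ of $v$. $\mathscr{K}_{nb}(G)$ is Kemeny's constant of the non-backtracking chain on arcs where from $(u,v)$ one moves to $(v,w)$ with probability $1/(\deg(v)-1)$ for each neighbor $w\neq u$ of $v$. *)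

theory Defs
  imports "Jordan_Normal_Form.Char_Poly" "HOL-Library.Product_Lexorder" "HOL-Library.Extended_Real"
begin

definition simple_graph :: "nat set \<Rightarrow> (nat \<Rightarrow> nat \<Rightarrow> bool) \<Rightarrow> bool" where
  "simple_graph V E \<longleftrightarrow> finite V \<and> (\<forall>u v. E u v \<longrightarrow> u \<in> V \<and> v \<in> V \<and> E v u \<and> u \<noteq> v)"

definition connected_graph :: "nat set \<Rightarrow> (nat \<Rightarrow> nat \<Rightarrow> bool) \<Rightarrow> bool" where
  "connected_graph V E \<longleftrightarrow> V \<noteq> {} \<and> (\<forall>u\<in>V. \<forall>v\<in>V. E\<^sup>*\<^sup>* u v)"

definition deg :: "(nat \<Rightarrow> nat \<Rightarrow> bool) \<Rightarrow> nat \<Rightarrow> nat" where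
  "deg E v = card {w. E v w}"

definition regular :: "nat set \<Rightarrow> (nat \<Rightarrow> nat \<Rightarrow> bool) \<Rightarrow> nat \<Rightarrow> bool" where
  "regular V E d \<longleftrightarrow> (\<forall>v\<in>V. deg E v = d)"

definition arcs :: "nat set \<Rightarrow> (nat \<Rightarrow> nat \<Rightarrow> bool) \<Rightarrow> (nat \<times> nat) set" where
  "arcs V E = {(u, v). u \<in> V \<and> v \<in> V \<and> E u v}"

definition P_edge :: "(nat \<Rightarrow> nat \<Rightarrow> bool) \<Rightarrow> nat \<times> nat \<Rightarrow> nat \<times> nat \<Rightarrow> real" where
  "P_edge E a b = (if snd a = fst b then 1 / real (deg E (snd a)) else 0)"

definition P_nb :: "(nat \<Rightarrow> nat \<Rightarrow> bool) \<Rightarrow> nat \<times> nat \<Rightarrow> nat \<times> nat \<Rightarrow> real" where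
  "P_nb E a b = (if snd a = fst b \<and> snd b \<noteq> fst a
                   then 1 / (real (deg E (snd a)) - 1) else 0)"

definition arc_matrix :: "nat set \<Rightarrow> (nat \<Rightarrow> nat \<Rightarrow> bool)
    \<Rightarrow> (nat \<times> nat \<Rightarrow> nat \<times> nat \<Rightarrow> real) \<Rightarrow> complex mat" where
  "arc_matrix V E Q = (let xs = sorted_list_of_set (arcs V E) in
     mat (length xs) (length xs) (\<lambda>(i, j). complex_of_real (Q (xs ! i) (xs ! j))))"

text \<open>Kemeny's constant: sum over eigenvalues (with algebraic multiplicity) other than the
  simple eigenvalue 1 of 1/(1 - rho). The sum is real for real matrices; we take its real part.\<close>
definition kemeny :: "complex mat \<Rightarrow> real" where
  "kemeny M = Re (\<Sum>\<rho> \<in> {\<rho>. poly (char_poly M) \<rho> = 0} - {1}.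
                    of_nat (order \<rho> (char_poly M)) / (1 - \<rho>))"

definition kemeny_edge :: "nat set \<Rightarrow> (nat \<Rightarrow> nat \<Rightarrow> bool) \<Rightarrow> real" where
  "kemeny_edge V E = kemeny (arc_matrix V E (P_edge E))"

definition kemeny_nb :: "nat set \<Rightarrow> (nat \<Rightarrow> nat \<Rightarrow> bool) \<Rightarrow> real" where
  "kemeny_nb V E = kemeny (arc_matrix V E (P_nb E))"

end

theory Submission
  imports Defs "Jordan_Normal_Form.Jordan_Normal_Form_Uniqueness"
    "Jordan_Normal_Form.Jordan_Normal_Form_Existence"
begin

text \<open>
  Let \<open>Q\<close> and \<open>R\<close> be the head and tail incidence matrices between arcs and vertices and \<open>J\<close>
  the arc reversal. The edge chain is \<open>Q R / d\<close>, the non-backtracking chain is \<open>(Q R - J) / (d - 1)\<close>,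
  and \<open>R Q = A\<close> is the adjacency matrix. Sylvester's determinant identity and the Ihara--Bass
  formula therefore express both characteristic polynomials through the spectrum of \<open>A\<close>, which is
  real, has trace zero and, by connectivity, the simple eigenvalue \<open>d\<close>. With
  \<open>T = \<Sum> d / (d - \<mu>)\<close> over the other eigenvalues \<open>\<mu>\<close>, Kemeny's constants are
  \<open>K\<^sub>e = n (d - 1) + T\<close> and \<open>K\<^sub>n\<^sub>b = n (d - 1)\<^sup>2 / d + (d - 1) / (d - 2) + (n - 1) + (d - 2) / d * T\<close>.
  As \<open>T \<ge> n - 2\<close>, this gives \<open>K\<^sub>n\<^sub>b \<le> (1 - 1/d\<^sup>2) K\<^sub>e + O(1)\<close> and \<open>K\<^sub>e \<ge> n\<close>,
  so the ratio is at most \<open>1 - 1/d\<^sup>2 + O(1/n)\<close>.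
\<close>

section \<open>Kemeny sums of polynomials\<close>

definition kemeny_poly :: "complex poly \<Rightarrow> complex" where
  "kemeny_poly p = (\<Sum>\<rho> \<in> {\<rho>. poly p \<rho> = 0} - {1}. of_nat (Polynomial.order \<rho> p) / (1 - \<rho>))"

lemma kemeny_eq_kemeny_poly: "kemeny M = Re (kemeny_poly (char_poly M))"
  unfolding kemeny_def kemeny_poly_def by simp

lemma kemeny_poly_eq_sum_superset:
  assumes "p \<noteq> 0" and "finite F" and "{\<rho>. poly p \<rho> = 0} \<subseteq> F"
  shows "kemeny_poly p = (\<Sum>\<rho> \<in> F - {1}. of_nat (Polynomial.order \<rho> p) / (1 - \<rho>))"
  unfolding kemeny_poly_def
  by (rule sum.mono_neutral_left) (use assms order_root in auto)

lemma kemeny_poly_mult: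
  assumes p: "p \<noteq> 0" and q: "q \<noteq> 0"
  shows "kemeny_poly (p * q) = kemeny_poly p + kemeny_poly q"
proof -
  let ?F = "{\<rho>. poly p \<rho> = 0} \<union> {\<rho>. poly q \<rho> = 0}"
  have F: "finite ?F" using poly_roots_finite p q by auto
  have pq: "p * q \<noteq> 0" using p q by auto
  have "kemeny_poly (p * q) = (\<Sum>\<rho> \<in> ?F - {1}. of_nat (Polynomial.order \<rho> (p * q)) / (1 - \<rho>))"
    by (rule kemeny_poly_eq_sum_superset[OF pq F]) auto
  also have "\<dots> = (\<Sum>\<rho> \<in> ?F - {1}.
      of_nat (Polynomial.order \<rho> p) / (1 - \<rho>) + of_nat (Polynomial.order \<rho> q) / (1 - \<rho>))"
    by (simp add: order_mult[OF pq] add_divide_distrib)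
  also have "\<dots> = kemeny_poly p + kemeny_poly q"
    by (simp add: sum.distrib kemeny_poly_eq_sum_superset[OF p F] kemeny_poly_eq_sum_superset[OF q F])
  finally show ?thesis .
qed

lemma kemeny_poly_linear: "kemeny_poly [:-a, 1:] = (if a = 1 then 0 else 1 / (1 - a))"
proof -
  have "{\<rho>. poly [:-a, 1:] \<rho> = 0} = {a}" by auto
  moreover have "Polynomial.order a [:-a, 1:] = 1" using order_power_n_n[of a 1] by simp
  ultimately show ?thesis unfolding kemeny_poly_def by auto
qed

lemma kemeny_poly_one [simp]: "kemeny_poly 1 = 0"
  unfolding kemeny_poly_def by simp

lemma kemeny_poly_power: "p \<noteq> 0 \<Longrightarrow> kemeny_poly (p ^ j) = of_nat j * kemeny_poly p"
  by (induct j) (auto simp: kemeny_poly_mult algebra_simps)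

lemma kemeny_poly_monom_power: "kemeny_poly ([:0, 1:] ^ j) = of_nat j"
  using kemeny_poly_power[of "[:0, 1:]" j] kemeny_poly_linear[of 0] by simp

lemma kemeny_poly_prod_list:
  "(\<And>x. x \<in> set xs \<Longrightarrow> f x \<noteq> 0) \<Longrightarrow>
    kemeny_poly (\<Prod>x\<leftarrow>xs. f x) = (\<Sum>x\<leftarrow>xs. kemeny_poly (f x))"
proof (induct xs)
  case (Cons a xs)
  then have "(\<Prod>x\<leftarrow>xs. f x) \<noteq> 0" by (auto simp: prod_list_zero_iff)
  with Cons show ?case by (simp add: kemeny_poly_mult)
qed simp

lemma linear_factors_mult: "[:-a, 1:] * [:-b, 1:] = [:a * b, -(a + b), 1 :: 'a :: comm_ring_1:]"
  by (simp add: algebra_simps)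

lemma monic_quadratic_factors:
  obtains a b :: complex where "[:p, -s, 1:] = [:-a, 1:] * [:-b, 1:]" "a + b = s" "a * b = p"
proof
  define r where "r = csqrt (s\<^sup>2 - 4 * p)"
  have r: "r\<^sup>2 = s\<^sup>2 - 4 * p" unfolding r_def by (rule power2_csqrt)
  have "(s + r) / 2 * (s - (s + r) / 2) = (s\<^sup>2 - r\<^sup>2) / 4"
    by (simp add: field_simps power2_eq_square)
  then show prod: "(s + r) / 2 * (s - (s + r) / 2) = p" using r by simp
  show sum: "(s + r) / 2 + (s - (s + r) / 2) = s" by simp
  show "[:p, -s, 1:] = [:-((s + r) / 2), 1:] * [:-(s - (s + r) / 2), 1:]"
    unfolding linear_factors_mult prod sum ..
qed

lemma kemeny_poly_quadratic:
  assumes "1 - s + p \<noteq> 0"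
  shows "kemeny_poly [:p, -s, 1:] = (2 - s) / (1 - s + p)"
proof -
  obtain a b where q: "[:p, -s, 1:] = [:-a, 1:] * [:-b, 1:]" and s: "a + b = s" and p: "a * b = p"
    by (rule monic_quadratic_factors)
  have ab: "(1 - a) * (1 - b) = 1 - s + p" using s p by (simp add: algebra_simps)
  then have a: "a \<noteq> 1" and b: "b \<noteq> 1" using assms by auto
  have "kemeny_poly [:p, -s, 1:] = kemeny_poly [:-a, 1:] + kemeny_poly [:-b, 1:]"
    unfolding q by (rule kemeny_poly_mult) auto
  also have "\<dots> = 1 / (1 - a) + 1 / (1 - b)" by (simp add: kemeny_poly_linear a b)
  also have "\<dots> = (2 - (a + b)) / ((1 - a) * (1 - b))"
    using a b by (simp add: field_simps)
  finally show ?thesis unfolding ab s .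
qed

lemma kemeny_poly_quadratic_root_one:
  assumes "p \<noteq> 1"
  shows "kemeny_poly [:p, -(1 + p), 1:] = 1 / (1 - p)"
proof -
  have "kemeny_poly [:p, -(1 + p), 1:] = kemeny_poly ([:-1, 1:] * [:-p, 1:])"
    by (simp add: linear_factors_mult add.commute)
  also have "\<dots> = kemeny_poly [:-1, 1:] + kemeny_poly [:-p, 1:]"
    by (rule kemeny_poly_mult) auto
  finally show ?thesis using assms by (simp add: kemeny_poly_linear)
qed

lemma kemeny_poly_linear_real:
  assumes "r \<noteq> 1"
  shows "kemeny_poly [:- of_real r, 1:] = of_real (1 / (1 - r))"
  using assms by (simp add: kemeny_poly_linear)

lemma kemeny_poly_quadratic_real:
  assumes "1 - s + p \<noteq> 0"
  shows "kemeny_poly [:of_real p, - of_real s, 1:] = of_real ((2 - s) / (1 - s + p))"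
proof -
  have "1 - of_real s + of_real p = (of_real (1 - s + p) :: complex)" by simp
  then have "1 - of_real s + of_real p \<noteq> (0 :: complex)" using assms by (metis of_real_eq_0_iff)
  from kemeny_poly_quadratic[OF this] show ?thesis by simp
qed

lemma kemeny_poly_edge_factor:
  fixes d :: nat and mu :: real
  assumes "d > 0" and "mu \<noteq> real d"
  shows "kemeny_poly [:- (of_real mu / of_nat d), 1:] = of_real (real d / (real d - mu))"
proof -
  have "mu / real d \<noteq> 1" using assms by (simp add: field_simps)
  from kemeny_poly_linear_real[OF this]
  have "kemeny_poly [:- of_real (mu / real d), 1:] = of_real (1 / (1 - mu / real d))" .
  moreover have "1 / (1 - mu / real d) = real d / (real d - mu)" using assms by (simp add: field_simps)
  ultimately show ?thesis by simp
qed

lemma kemeny_poly_nb_factors: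
  fixes d :: nat and mu :: real
  assumes d: "d \<ge> 3"
  defines "c \<equiv> of_nat d - (1 :: complex)"
  shows "kemeny_poly [:- (1 / c\<^sup>2), 0, 1:] = of_real (2 * ((real d - 1)\<^sup>2 / (real d * (real d - 2))))"
    and "kemeny_poly [:1 / c, - (of_nat d / c), 1:] = of_real ((real d - 1) / (real d - 2))"
    and "mu \<noteq> real d \<Longrightarrow>
      kemeny_poly [:1 / c, - (of_real mu / c), 1:] = of_real ((2 * (real d - 1) - mu) / (real d - mu))"
proof -
  define D where "D = real d"
  have c: "c = of_real (D - 1)" unfolding c_def D_def by simp
  have D1: "D - 1 \<noteq> 0" "D - 2 \<noteq> 0" "D \<noteq> 0" "(D - 1)\<^sup>2 \<noteq> 0" using d unfolding D_def by auto
  have "(D - 1)\<^sup>2 - 1 = D * (D - 2)" by (simp add: power2_eq_square algebra_simps)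
  then have w: "1 - 0 + - (1 / (D - 1)\<^sup>2) = D * (D - 2) / (D - 1)\<^sup>2"
    using D1 by (simp add: field_simps)
  then have "1 - 0 + - (1 / (D - 1)\<^sup>2) \<noteq> 0" using D1 by simp
  from kemeny_poly_quadratic_real[OF this]
  have "kemeny_poly [:of_real (- (1 / (D - 1)\<^sup>2)), - of_real 0, 1:]
      = of_real (2 * ((D - 1)\<^sup>2 / (D * (D - 2))))"
    unfolding w using D1 by simp
  then show "kemeny_poly [:- (1 / c\<^sup>2), 0, 1:] = of_real (2 * ((real d - 1)\<^sup>2 / (real d * (real d - 2))))"
    unfolding c D_def by simp
  have "1 / (D - 1) \<noteq> 1" using d D1 unfolding D_def by (simp add: field_simps)
  then have "of_real (1 / (D - 1)) \<noteq> (1 :: complex)" by (metis of_real_eq_1_iff)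
  from kemeny_poly_quadratic_root_one[OF this]
  have "kemeny_poly [:of_real (1 / (D - 1)), - (1 + of_real (1 / (D - 1))), 1:]
      = of_real ((D - 1) / (D - 2))"
    using D1 by (simp add: field_simps)
  moreover have "[:1 / c, - (of_nat d / c), 1:]
      = [:of_real (1 / (D - 1)), - (1 + of_real (1 / (D - 1))), 1:]"
    using D1 unfolding c D_def by (simp add: field_simps)
  ultimately show "kemeny_poly [:1 / c, - (of_nat d / c), 1:] = of_real ((real d - 1) / (real d - 2))"
    unfolding D_def by (simp only:)
  assume mu: "mu \<noteq> real d"
  have den: "1 - mu / (D - 1) + 1 / (D - 1) = (D - mu) / (D - 1)" using D1 by (simp add: field_simps)
  have num: "2 - mu / (D - 1) = (2 * (D - 1) - mu) / (D - 1)" using D1 by (simp add: field_simps)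
  have ne: "1 - mu / (D - 1) + 1 / (D - 1) \<noteq> 0" unfolding den using mu D1 unfolding D_def by simp
  have val: "(2 - mu / (D - 1)) / (1 - mu / (D - 1) + 1 / (D - 1)) = (2 * (D - 1) - mu) / (D - mu)"
    unfolding den num using D1 by simp
  from kemeny_poly_quadratic_real[OF ne, unfolded val]
  show "kemeny_poly [:1 / c, - (of_real mu / c), 1:] = of_real ((2 * (real d - 1) - mu) / (real d - mu))"
    unfolding c D_def by simp
qed

lemma poly_char_poly_eq_det:
  fixes M :: "'a :: field mat"
  assumes "M \<in> carrier_mat n n"
  shows "poly (char_poly M) x = det (x \<cdot>\<^sub>m 1\<^sub>m n - M)"
proof -
  have "- char_matrix M x = x \<cdot>\<^sub>m 1\<^sub>m n - M"
    unfolding char_matrix_def using assms by (intro eq_matI) auto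
  then show ?thesis using char_poly_matrix[OF assms, of x] by simp
qed

lemma length_char_poly_linear_factors:
  assumes "M \<in> carrier_mat n n" and "char_poly M = (\<Prod>e\<leftarrow>es. [:-e, 1:])"
  shows "length es = n"
  using degree_monic_char_poly[OF assms(1)] unfolding assms(2) by (simp add: degree_linear_factors)

lemma char_poly_neq_zero: "M \<in> carrier_mat n n \<Longrightarrow> char_poly M \<noteq> 0"
  using degree_monic_char_poly[of M n] by auto

lemma det_smult_minus_smult_eq_prod:
  fixes M :: "'a :: field mat"
  assumes M: "M \<in> carrier_mat n n" and es: "char_poly M = (\<Prod>e\<leftarrow>es. [:-e, 1:])"
  shows "det (a \<cdot>\<^sub>m 1\<^sub>m n - b \<cdot>\<^sub>m M) = (\<Prod>e\<leftarrow>es. a - b * e)"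
proof (cases "b = 0")
  case True
  have "length es = n" by (rule length_char_poly_linear_factors[OF M es])
  moreover have "a \<cdot>\<^sub>m 1\<^sub>m n - b \<cdot>\<^sub>m M = a \<cdot>\<^sub>m 1\<^sub>m n" using M True by (intro eq_matI) auto
  moreover have "(\<Prod>e\<leftarrow>es. a - b * e) = a ^ length es" using True by (induct es) auto
  ultimately show ?thesis using True by simp
next
  case False
  have "a \<cdot>\<^sub>m 1\<^sub>m n - b \<cdot>\<^sub>m M = b \<cdot>\<^sub>m ((a / b) \<cdot>\<^sub>m 1\<^sub>m n - M)"
    using M False by (intro eq_matI) (auto simp: field_simps)
  then have "det (a \<cdot>\<^sub>m 1\<^sub>m n - b \<cdot>\<^sub>m M) = b ^ n * poly (char_poly M) (a / b)"
    using M by (simp add: poly_char_poly_eq_det[OF M])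
  also have "\<dots> = b ^ length es * (\<Prod>e\<leftarrow>es. a / b - e)"
    unfolding es length_char_poly_linear_factors[OF M es] by (simp add: poly_prod_list comp_def)
  also have "\<dots> = (\<Prod>e\<leftarrow>es. a - b * e)"
    using False by (induct es) (auto simp: field_simps)
  finally show ?thesis .
qed

text \<open>Sylvester's determinant identity, in a form that holds for every \<open>s\<close>: multiply
  \<open>[s I, X; Y, I]\<close> by elementary block matrices on either side.\<close>

lemma det_smult_minus_mult_commute:
  fixes X :: "'a :: idom mat"
  assumes X: "X \<in> carrier_mat k n" and Y: "Y \<in> carrier_mat n k"
  shows "s ^ n * det (s \<cdot>\<^sub>m 1\<^sub>m k - X * Y) = s ^ k * det (s \<cdot>\<^sub>m 1\<^sub>m n - Y * X)"
proof -
  have XY: "X * Y \<in> carrier_mat k k" "Y * X \<in> carrier_mat n n" using X Y by auto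
  define M where "M = four_block_mat (s \<cdot>\<^sub>m 1\<^sub>m k) X Y (1\<^sub>m n)"
  define L where "L = four_block_mat (1\<^sub>m k) (0\<^sub>m k n) (- Y) (1\<^sub>m n)"
  define L' where "L' = four_block_mat (1\<^sub>m k) (0\<^sub>m k n) (- Y) (s \<cdot>\<^sub>m 1\<^sub>m n)"
  have carr: "M \<in> carrier_mat (k + n) (k + n)" "L \<in> carrier_mat (k + n) (k + n)"
    "L' \<in> carrier_mat (k + n) (k + n)"
    unfolding M_def L_def L'_def using X Y by auto
  have "M * L = four_block_mat (s \<cdot>\<^sub>m 1\<^sub>m k - X * Y) X (0\<^sub>m n k) (1\<^sub>m n)"
    unfolding M_def L_def using X Y
    by (subst mult_four_block_mat[of _ k k _ n _ n _ _ k _ n])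
      (auto simp: mult_smult_assoc_mat)
  moreover have "det \<dots> = det (s \<cdot>\<^sub>m 1\<^sub>m k - X * Y) * det (1\<^sub>m n :: 'a mat)"
    by (rule det_four_block_mat_lower_left_zero) (use X XY in \<open>auto simp: minus_carrier_mat\<close>)
  ultimately have det_right: "det (M * L) = det (s \<cdot>\<^sub>m 1\<^sub>m k - X * Y)" by simp
  have "L' * M = four_block_mat (s \<cdot>\<^sub>m 1\<^sub>m k) X (0\<^sub>m n k) (s \<cdot>\<^sub>m 1\<^sub>m n - Y * X)"
    unfolding M_def L'_def using X Y
    by (subst mult_four_block_mat[of _ k k _ n _ n _ _ k _ n])
      (auto simp: mult_smult_assoc_mat mult_smult_distrib)
  moreover have "det \<dots> = det (s \<cdot>\<^sub>m 1\<^sub>m k) * det (s \<cdot>\<^sub>m 1\<^sub>m n - Y * X)"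
    by (rule det_four_block_mat_lower_left_zero) (use X XY in \<open>auto simp: minus_carrier_mat\<close>)
  ultimately have det_left: "det (L' * M) = s ^ k * det (s \<cdot>\<^sub>m 1\<^sub>m n - Y * X)" by simp
  have "det L = 1" "det L' = s ^ n"
    unfolding L_def L'_def using Y by (simp_all add: det_four_block_mat_upper_right_zero[of _ k _ n])
  then show ?thesis
    using det_right det_left det_mult[OF carr(1,2)] det_mult[OF carr(3,1)] by (simp add: mult.commute)
qed

lemma poly_eqI_infinite:
  fixes p q :: "'a :: idom poly"
  assumes "infinite S" and "\<And>x. x \<in> S \<Longrightarrow> poly p x = poly q x"
  shows "p = q"
proof (rule ccontr)
  assume "p \<noteq> q"
  then have "finite {x. poly (p - q) x = 0}" by (intro poly_roots_finite) simp
  moreover have "S \<subseteq> {x. poly (p - q) x = 0}" using assms(2) by auto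
  ultimately show False using assms(1) finite_subset by blast
qed

lemma order_prod_linear_factors:
  fixes a :: "'a :: idom"
  shows "Polynomial.order a (\<Prod>e\<leftarrow>es. [:-e, 1:]) = count (mset es) a"
proof (induct es)
  case (Cons e es)
  have "monic (\<Prod>e\<leftarrow>es. [:-e, 1:] :: 'a poly)" by (rule monic_prod_list) auto
  then have nz: "[:-e, 1:] * (\<Prod>e\<leftarrow>es. [:-e, 1:]) \<noteq> 0" by (intro no_zero_divisors) auto
  have "Polynomial.order a [:-e, 1:] = (if e = a then 1 else 0)"
    using order_power_n_n[of a 1] by (auto intro!: order_0I)
  then show ?case using Cons order_mult[OF nz] by simp
qed (simp add: order_0I)

definition mat_trace :: "'a :: comm_ring_1 mat \<Rightarrow> 'a" where
  "mat_trace M = (\<Sum>i\<in>{0..<dim_row M}. M $$ (i, i))"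

lemma mat_trace_mult_commute:
  assumes X: "X \<in> carrier_mat n m" and Y: "Y \<in> carrier_mat m n"
  shows "mat_trace (X * Y) = mat_trace (Y * X)"
proof -
  have "mat_trace (X * Y) = (\<Sum>i\<in>{0..<n}. \<Sum>j\<in>{0..<m}. X $$ (i, j) * Y $$ (j, i))"
    unfolding mat_trace_def using X Y by (auto simp: scalar_prod_def intro!: sum.cong)
  also have "\<dots> = (\<Sum>j\<in>{0..<m}. \<Sum>i\<in>{0..<n}. Y $$ (j, i) * X $$ (i, j))"
    by (subst sum.swap) (simp add: mult.commute)
  also have "\<dots> = mat_trace (Y * X)"
    unfolding mat_trace_def using X Y by (auto simp: scalar_prod_def intro!: sum.cong)
  finally show ?thesis .
qed

lemma sum_eigenvalues_eq_mat_trace: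
  fixes A :: "complex mat"
  assumes A: "A \<in> carrier_mat n n" and es: "char_poly A = (\<Prod>e\<leftarrow>es. [:-e, 1:])"
  shows "sum_list es = mat_trace A"
proof -
  obtain B P Q where "schur_decomposition A es = (B, P, Q)"
    by (cases "schur_decomposition A es") auto
  from schur_decomposition[OF A es this]
  have "similar_mat_wit A B P Q" and diag: "diag_mat B = es" by auto
  then have B: "B \<in> carrier_mat n n" and P: "P \<in> carrier_mat n n" and Q: "Q \<in> carrier_mat n n"
    and QP: "Q * P = 1\<^sub>m n" and APBQ: "A = P * B * Q"
    using A unfolding similar_mat_wit_def Let_def by auto
  have "mat_trace A = mat_trace (Q * (P * B))"
    unfolding APBQ using P B Q by (intro mat_trace_mult_commute) auto
  also have "Q * (P * B) = B" using P B Q QP by (simp add: assoc_mult_mat[symmetric])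
  finally show ?thesis
    unfolding diag[symmetric] diag_mat_def mat_trace_def using B
    by (simp add: interv_sum_list_conv_sum_set_nat)
qed

lemma eigenvalue_norm_le_row_sum:
  fixes A :: "complex mat"
  assumes A: "A \<in> carrier_mat n n" and v: "eigenvector A v e"
    and rows: "\<And>i. i < n \<Longrightarrow> (\<Sum>j\<in>{0..<n}. cmod (A $$ (i, j))) \<le> r"
  shows "cmod e \<le> r"
proof -
  have vc: "v \<in> carrier_vec n" and v0: "v \<noteq> 0\<^sub>v n" and Av: "A *\<^sub>v v = e \<cdot>\<^sub>v v"
    using v A unfolding eigenvector_def by auto
  obtain j0 where j0: "j0 < n" "v $ j0 \<noteq> 0" using vc v0 by (metis eq_vecI carrier_vecD index_zero_vec)
  define m where "m = Max ((\<lambda>j. cmod (v $ j)) ` {0..<n})"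
  have max: "cmod (v $ j) \<le> m" if "j < n" for j unfolding m_def using that by simp
  have "m \<in> (\<lambda>j. cmod (v $ j)) ` {0..<n}" unfolding m_def using j0 by (intro Max_in) auto
  then obtain i0 where i0: "i0 < n" and m: "cmod (v $ i0) = m" by auto
  have pos: "m > 0" using max[OF j0(1)] j0(2) by (meson less_le_trans zero_less_norm_iff)
  have "cmod e * cmod (v $ i0) = cmod (\<Sum>j\<in>{0..<n}. A $$ (i0, j) * v $ j)"
    using arg_cong[OF Av, of "\<lambda>w. cmod (w $ i0)"] A vc i0
    by (simp add: norm_mult scalar_prod_def)
  also have "\<dots> \<le> (\<Sum>j\<in>{0..<n}. cmod (A $$ (i0, j)) * m)"
    by (rule order_trans[OF norm_sum sum_mono]) (auto simp: norm_mult m intro: mult_left_mono max)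
  also have "\<dots> \<le> r * m"
    unfolding sum_distrib_right[symmetric] using rows[OF i0] pos m by (simp add: mult_right_mono)
  finally show ?thesis using pos m by simp
qed

definition hermitian :: "complex mat \<Rightarrow> bool" where
  "hermitian A \<longleftrightarrow> transpose_mat (map_mat cnj A) = A"

lemma hermitianI:
  assumes A: "A \<in> carrier_mat n n"
    and entries: "\<And>i j. i < n \<Longrightarrow> j < n \<Longrightarrow> A $$ (j, i) = cnj (A $$ (i, j))"
  shows "hermitian A"
  unfolding hermitian_def
proof (rule eq_matI)
  fix i j assume "i < dim_row A" "j < dim_col A"
  then show "transpose_mat (map_mat cnj A) $$ (i, j) = A $$ (i, j)"
    using A entries[of j i] by simp
qed (use A in auto)

lemma hermitianD:
  assumes "hermitian A" and "i < dim_row A" and "j < dim_col A"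
  shows "A $$ (j, i) = cnj (A $$ (i, j))"
proof -
  have "A $$ (j, i) = transpose_mat (map_mat cnj A) $$ (j, i)"
    using assms(1) unfolding hermitian_def by simp
  then show ?thesis using assms(2,3) by simp
qed

lemma hermitian_cscalar_prod:
  assumes H: "hermitian A" and A: "A \<in> carrier_mat n n"
    and v: "v \<in> carrier_vec n" and w: "w \<in> carrier_vec n"
  shows "(A *\<^sub>v v) \<bullet>c w = v \<bullet>c (A *\<^sub>v w)"
proof -
  have "(A *\<^sub>v v) \<bullet>c w = (\<Sum>i\<in>{0..<n}. \<Sum>j\<in>{0..<n}. A $$ (i, j) * v $ j * cnj (w $ i))"
    using A v w by (simp add: scalar_prod_def sum_distrib_right)
  also have "\<dots> = (\<Sum>j\<in>{0..<n}. \<Sum>i\<in>{0..<n}. A $$ (i, j) * v $ j * cnj (w $ i))"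
    by (rule sum.swap)
  also have "\<dots> = (\<Sum>j\<in>{0..<n}. \<Sum>i\<in>{0..<n}. v $ j * cnj (A $$ (j, i) * w $ i))"
  proof (intro sum.cong refl)
    fix i j assume "i \<in> {0..<n}" "j \<in> {0..<n}"
    then have "A $$ (i, j) = cnj (A $$ (j, i))" using hermitianD[OF H, of j i] A by auto
    then show "A $$ (i, j) * v $ j * cnj (w $ i) = v $ j * cnj (A $$ (j, i) * w $ i)"
      by (simp add: mult_ac)
  qed
  also have "\<dots> = v \<bullet>c (A *\<^sub>v w)"
    using A v w by (simp add: scalar_prod_def sum_distrib_left cnj_sum)
  finally show ?thesis .
qed

lemma hermitian_eigenvalue_real:
  assumes H: "hermitian A" and A: "A \<in> carrier_mat n n" and v: "eigenvector A v e"
  shows "cnj e = e"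
proof -
  have vc: "v \<in> carrier_vec n" and v0: "v \<noteq> 0\<^sub>v n" and Av: "A *\<^sub>v v = e \<cdot>\<^sub>v v"
    using v A unfolding eigenvector_def by auto
  have "e * (v \<bullet>c v) = (A *\<^sub>v v) \<bullet>c v"
    unfolding Av using vc by (simp add: smult_scalar_prod_distrib[of _ n])
  also have "\<dots> = v \<bullet>c (A *\<^sub>v v)" by (rule hermitian_cscalar_prod[OF H A vc vc])
  also have "\<dots> = cnj e * (v \<bullet>c v)"
    unfolding Av using vc by (simp add: conjugate_smult_vec scalar_prod_smult_distrib[of _ n])
  finally show ?thesis using v0 vc by simp
qed

lemma hermitian_mat_kernel_square:
  assumes H: "hermitian C" and C: "C \<in> carrier_mat n n" and v: "v \<in> carrier_vec n"
    and CCv: "C *\<^sub>v (C *\<^sub>v v) = 0\<^sub>v n"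
  shows "C *\<^sub>v v = 0\<^sub>v n"
proof -
  have w: "C *\<^sub>v v \<in> carrier_vec n" using C v by simp
  have "(C *\<^sub>v v) \<bullet>c (C *\<^sub>v v) = v \<bullet>c (C *\<^sub>v (C *\<^sub>v v))"
    by (rule hermitian_cscalar_prod[OF H C v w])
  also have "\<dots> = 0" unfolding CCv using v by simp
  finally show ?thesis using w by simp
qed

lemma char_matrix_hermitian:
  assumes "hermitian A" and "cnj e = e"
  shows "hermitian (char_matrix A e)"
proof (rule hermitianI)
  have "dim_col A = dim_row A"
    using assms(1) unfolding hermitian_def by (metis index_transpose_mat(2,3) index_map_mat(2,3))
  then show "char_matrix A e \<in> carrier_mat (dim_row A) (dim_row A)" by (simp add: char_matrix_def)
  fix i j assume "i < dim_row A" "j < dim_row A"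
  then show "char_matrix A e $$ (j, i) = cnj (char_matrix A e $$ (i, j))"
    using hermitianD[OF assms(1), of i j] assms(2) \<open>dim_col A = dim_row A\<close> by (simp add: char_matrix_def)
qed

lemma sum_list_min_two_eq_min_one:
  fixes ss :: "nat list"
  assumes "\<forall>s\<in>set ss. 1 \<le> s" and "sum_list (map (min 2) ss) = sum_list (map (min 1) ss)"
  shows "sum_list ss = sum_list (map (min 1) ss)"
  using assms
proof (induct ss)
  case (Cons s ss)
  have "sum_list (map (min 1) ss) \<le> sum_list (map (min 2) ss)" by (rule sum_list_mono) auto
  with Cons.prems have "min 2 s = min 1 s"
    and rest: "sum_list (map (min 2) ss) = sum_list (map (min 1) ss)" by auto
  with Cons.prems(1) have "s = 1" by auto
  with Cons.hyps[OF _ rest] Cons.prems(1) show ?case by simp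
qed simp

text \<open>If the generalised eigenspaces of \<open>e\<close> stabilise after one step, all Jordan blocks of \<open>e\<close>
  have size one, so algebraic and geometric multiplicity agree.\<close>

lemma order_char_poly_eq_dim_gen_eigenspace:
  fixes A :: "complex mat"
  assumes A: "A \<in> carrier_mat n n"
    and stable: "dim_gen_eigenspace A e 2 = dim_gen_eigenspace A e 1"
  shows "Polynomial.order e (char_poly A) = dim_gen_eigenspace A e 1"
proof -
  obtain es where "char_poly A = (\<Prod>e\<leftarrow>es. [:-e, 1:])" using char_poly_factorized[OF A] by auto
  then obtain n_as where jnf: "jordan_nf A n_as" using jordan_nf_exists[OF A] by auto
  define ss where "ss = map fst [(m, a)\<leftarrow>n_as. a = e]"
  have ord: "Polynomial.order e (char_poly A) = sum_list ss"
    unfolding jordan_nf_order[OF jnf] ss_def by (induct n_as) auto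
  have dim: "dim_gen_eigenspace A e k = sum_list (map (min k) ss)" for k
    unfolding dim_gen_eigenspace[OF jnf] ss_def by (induct n_as) auto
  have "\<forall>s\<in>set ss. 1 \<le> s" using jnf unfolding jordan_nf_def ss_def by (auto simp: Suc_le_eq image_iff)
  then show ?thesis using stable unfolding ord dim by (rule sum_list_min_two_eq_min_one)
qed

lemma hermitian_order_char_poly:
  assumes H: "hermitian A" and A: "A \<in> carrier_mat n n" and e: "cnj e = e"
  shows "Polynomial.order e (char_poly A) = kernel_dim (char_matrix A e)"
proof -
  define C where "C = char_matrix A e"
  have C: "C \<in> carrier_mat n n" unfolding C_def using A by simp
  have HC: "hermitian C" unfolding C_def by (rule char_matrix_hermitian[OF H e])
  have "mat_kernel (C ^\<^sub>m 2) = mat_kernel C"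
  proof -
    have "C ^\<^sub>m 2 = C * C" using C by (simp add: numeral_2_eq_2)
    moreover have "C *\<^sub>v (C *\<^sub>v v) = 0\<^sub>v n \<longleftrightarrow> C *\<^sub>v v = 0\<^sub>v n" if "v \<in> carrier_vec n" for v
      using hermitian_mat_kernel_square[OF HC C that] C that by auto
    ultimately show ?thesis
      using C by (auto simp: mat_kernel_def assoc_mult_mat_vec[of _ n n _ n])
  qed
  then have "dim_gen_eigenspace A e 2 = dim_gen_eigenspace A e 1"
    unfolding dim_gen_eigenspace_def kernel_dim_def C_def[symmetric] using C by simp
  then show ?thesis
    using order_char_poly_eq_dim_gen_eigenspace[OF A] unfolding dim_gen_eigenspace_def by simp
qed

lemma char_matrix_mult_vec:
  assumes "A \<in> carrier_mat n n" and "v \<in> carrier_vec n"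
  shows "char_matrix A e *\<^sub>v v = A *\<^sub>v v - e \<cdot>\<^sub>v v"
  using assms unfolding char_matrix_def
  by (subst add_mult_distrib_mat_vec[of _ n n])
    (auto intro!: eq_vecI simp: scalar_prod_def if_distrib if_distribR sum.delta cong: if_cong)

lemma kernel_dim_le_one:
  fixes C :: "'a :: field mat"
  assumes C: "C \<in> carrier_mat n n" and u: "u \<in> mat_kernel C"
    and spanned: "\<And>v. v \<in> mat_kernel C \<Longrightarrow> \<exists>c. v = c \<cdot>\<^sub>v u"
  shows "kernel_dim C \<le> 1"
proof -
  interpret K: kernel n n C by unfold_locales (rule C)
  have sub: "{u} \<subseteq> mat_kernel C" using u by auto
  interpret S: submodule class_ring "K.Ker.span {u}" K.VK by (rule K.Ker.span_is_submodule[OF sub])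
  have "u \<in> K.Ker.span {u}" using K.Ker.in_own_span[OF sub] by auto
  then have "mat_kernel C \<subseteq> K.Ker.span {u}" using spanned S.smult_closed by fastforce
  with K.Ker.span_is_subset2[OF sub] have "K.Ker.span {u} = mat_kernel C" by auto
  then have "K.dim \<le> card {u}" by (intro K.Ker.gen_ge_dim[OF _ sub]) auto
  then show ?thesis by simp
qed

lemma smult_minus_mult_smult_plus_involution:
  fixes J :: "'a :: comm_ring_1 mat"
  assumes J: "J \<in> carrier_mat n n" and JJ: "J * J = 1\<^sub>m n"
  shows "(z \<cdot>\<^sub>m 1\<^sub>m n - J) * (z \<cdot>\<^sub>m 1\<^sub>m n + J) = (z\<^sup>2 - 1) \<cdot>\<^sub>m 1\<^sub>m n"
proof -
  have "(z \<cdot>\<^sub>m 1\<^sub>m n - J) * (z \<cdot>\<^sub>m 1\<^sub>m n + J) = z \<cdot>\<^sub>m (z \<cdot>\<^sub>m 1\<^sub>m n + J) - J * (z \<cdot>\<^sub>m 1\<^sub>m n + J)"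
    using J by (simp add: minus_mult_distrib_mat[of _ n n _ _ n] mult_smult_assoc_mat[of _ n n _ n])
  also have "\<dots> = (z\<^sup>2 - 1) \<cdot>\<^sub>m 1\<^sub>m n"
    using J by (simp add: mult_add_distrib_mat[of _ n n _ n] mult_smult_distrib JJ)
      (rule eq_matI; simp add: power2_eq_square algebra_simps)
  finally show ?thesis .
qed

text \<open>Conjugation by \<open>S\<close> turns \<open>z I + J\<close> into \<open>z I - J\<close>, so both have the same determinant.\<close>

lemma det_smult_minus_involution_square:
  fixes J S :: "'a :: comm_ring_1 mat"
  assumes J: "J \<in> carrier_mat n n" and S: "S \<in> carrier_mat n n"
    and JJ: "J * J = 1\<^sub>m n" and SS: "S * S = 1\<^sub>m n" and SJS: "S * J * S = - J"
  shows "det (z \<cdot>\<^sub>m 1\<^sub>m n - J) ^ 2 = (z\<^sup>2 - 1) ^ n"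
proof -
  have zJ: "z \<cdot>\<^sub>m 1\<^sub>m n - J \<in> carrier_mat n n" "z \<cdot>\<^sub>m 1\<^sub>m n + J \<in> carrier_mat n n" using J by auto
  have "S * (z \<cdot>\<^sub>m 1\<^sub>m n + J) * S = z \<cdot>\<^sub>m (S * S) + S * J * S"
    using J S by (simp add: mult_add_distrib_mat[of _ n n _ n] add_mult_distrib_mat[of _ n n _ _ n]
        mult_smult_distrib[of S n n _ n] mult_smult_assoc_mat[of _ n n _ n])
  also have "\<dots> = z \<cdot>\<^sub>m 1\<^sub>m n - J" unfolding SS SJS using J by (intro eq_matI) auto
  finally have conj: "S * (z \<cdot>\<^sub>m 1\<^sub>m n + J) * S = z \<cdot>\<^sub>m 1\<^sub>m n - J" .
  have "det (S * (z \<cdot>\<^sub>m 1\<^sub>m n + J) * S) = det (S * S) * det (z \<cdot>\<^sub>m 1\<^sub>m n + J)"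
    using S zJ by (simp add: det_mult[of _ n] ac_simps)
  then have "det (z \<cdot>\<^sub>m 1\<^sub>m n - J) = det (z \<cdot>\<^sub>m 1\<^sub>m n + J)" unfolding conj SS by simp
  then show ?thesis
    using det_mult[OF zJ] smult_minus_mult_smult_plus_involution[OF J JJ] by (simp add: power2_eq_square)
qed

lemma of_real_sum_list_map: "(\<Sum>x\<leftarrow>xs. of_real (f x)) = (of_real (\<Sum>x\<leftarrow>xs. f x) :: 'a :: real_algebra_1)"
  by (induct xs) auto

section \<open>Regular graphs and their arc matrices\<close>

lemma sum_nth_eq_sum_set:
  assumes "distinct xs"
  shows "(\<Sum>i\<in>{0..<length xs}. f (xs ! i)) = (\<Sum>x\<in>set xs. f x)"
proof -
  have "bij_betw ((!) xs) {0..<length xs} (set xs)"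
    using bij_betw_nth[OF assms, of "{..<length xs}"] by (simp add: atLeast0LessThan)
  then show ?thesis by (simp add: sum.reindex_bij_betw)
qed

locale regular_graph =
  fixes V :: "nat set" and E :: "nat \<Rightarrow> nat \<Rightarrow> bool" and d :: nat
  assumes simple: "simple_graph V E" and regular: "regular V E d"
begin

abbreviation nV :: nat where "nV \<equiv> card V"
abbreviation nA :: nat where "nA \<equiv> card (arcs V E)"

definition vtx :: "nat list" where "vtx = sorted_list_of_set V"
definition arc :: "(nat \<times> nat) list" where "arc = sorted_list_of_set (arcs V E)"

lemma finite_V: "finite V"
  using simple unfolding simple_graph_def by auto

lemma edgeD:
  assumes "E u v"
  shows "u \<in> V" and "v \<in> V" and "E v u" and "u \<noteq> v"
  using simple assms unfolding simple_graph_def by auto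

lemma edge_commute: "E u v \<longleftrightarrow> E v u"
  using edgeD(3) by blast

lemma arcs_eq: "arcs V E = {(u, v). E u v}"
  unfolding arcs_def using edgeD by auto

lemma finite_arcs: "finite (arcs V E)"
  using finite_subset[of "arcs V E" "V \<times> V"] finite_V unfolding arcs_def by auto

lemma neighbours_subset: "{w. E v w} \<subseteq> V"
  using edgeD by auto

lemma card_neighbours: "v \<in> V \<Longrightarrow> card {w. E v w} = d"
  using regular unfolding regular_def deg_def by auto

lemma deg_eq: "v \<in> V \<Longrightarrow> deg E v = d"
  using card_neighbours unfolding deg_def .

lemma vtx: "distinct vtx" "set vtx = V" "length vtx = nV"
  unfolding vtx_def using finite_V by auto

lemma arc: "distinct arc" "set arc = arcs V E" "length arc = nA"
  unfolding arc_def using finite_arcs by auto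

lemma sum_vtx: "(\<Sum>i\<in>{0..<nV}. f (vtx ! i)) = (\<Sum>u\<in>V. f u)"
  using sum_nth_eq_sum_set[OF vtx(1), of f] vtx by simp

lemma sum_arc: "(\<Sum>a\<in>{0..<nA}. f (arc ! a)) = (\<Sum>x\<in>arcs V E. f x)"
  using sum_nth_eq_sum_set[OF arc(1), of f] arc by simp

lemma vtx_in_V: "i < nV \<Longrightarrow> vtx ! i \<in> V"
  using vtx nth_mem by metis

lemma arc_in_arcs: "a < nA \<Longrightarrow> arc ! a \<in> arcs V E"
  using arc nth_mem by metis

lemma arc_edge: "a < nA \<Longrightarrow> E (fst (arc ! a)) (snd (arc ! a))"
  using arc_in_arcs[of a] unfolding arcs_eq by (cases "arc ! a") auto

lemma vtx_eq_iff: "i < nV \<Longrightarrow> j < nV \<Longrightarrow> vtx ! i = vtx ! j \<longleftrightarrow> i = j"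
  using vtx nth_eq_iff_index_eq by metis

lemma arc_eq_iff: "a < nA \<Longrightarrow> b < nA \<Longrightarrow> arc ! a = arc ! b \<longleftrightarrow> a = b"
  using arc nth_eq_iff_index_eq by metis

lemma swap_arc_in_arcs: "x \<in> arcs V E \<Longrightarrow> prod.swap x \<in> arcs V E"
  unfolding arcs_eq using edgeD by (cases x) auto

lemma sum_vtx_delta:
  "(\<Sum>i\<in>{0..<nV}. if vtx ! i = u then c else 0) = (if u \<in> V then c else (0 :: 'a :: comm_monoid_add))"
  unfolding sum_vtx[of "\<lambda>x. if x = u then c else 0"] using finite_V by simp

lemma sum_arc_delta:
  "(\<Sum>a\<in>{0..<nA}. if arc ! a = x then c else 0) = (if x \<in> arcs V E then c else (0 :: 'a :: comm_monoid_add))"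
  unfolding sum_arc[of "\<lambda>y. if y = x then c else 0"] using finite_arcs by simp

lemma sum_neighbours:
  assumes "u \<in> V"
  shows "(\<Sum>j\<in>{0..<nV}. if E u (vtx ! j) then (1 :: 'a :: comm_semiring_1) else 0) = of_nat d"
proof -
  have "(\<Sum>j\<in>{0..<nV}. if E u (vtx ! j) then (1 :: 'a) else 0) = (\<Sum>w\<in>V. if E u w then 1 else 0)"
    by (rule sum_vtx)
  also have "\<dots> = of_nat (card {w. E u w})"
    using finite_V neighbours_subset by (simp add: sum.If_cases Collect_conj_eq Int_absorb1 Int_commute)
  finally show ?thesis using card_neighbours[OF assms] by simp
qed

lemma card_arcs_into: "v \<in> V \<Longrightarrow> card {x \<in> arcs V E. snd x = v} = d"
proof -
  assume v: "v \<in> V"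
  have "{x \<in> arcs V E. snd x = v} = (\<lambda>u. (u, v)) ` {u. E v u}"
    unfolding arcs_eq using edgeD by auto
  also have "card \<dots> = card {u. E v u}" by (rule card_image) (auto simp: inj_on_def)
  finally show ?thesis using card_neighbours[OF v] by simp
qed

lemma card_arcs: "nA = nV * d"
proof -
  have "arcs V E = (\<Union>v\<in>V. Pair v ` {w. E v w})"
    unfolding arcs_eq using edgeD by auto
  then have "nA = (\<Sum>v\<in>V. card (Pair v ` {w. E v w}))"
    using finite_V finite_subset[OF neighbours_subset finite_V]
    by (simp only:) (subst card_UN_disjoint; auto)
  also have "\<dots> = (\<Sum>v\<in>V. d)"
    using card_neighbours by (intro sum.cong refl) (subst card_image, auto simp: inj_on_def)
  finally show ?thesis by simp
qed

definition adj_mat :: "complex mat" where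
  "adj_mat = mat nV nV (\<lambda>(i, j). if E (vtx ! i) (vtx ! j) then 1 else 0)"

definition head_mat :: "complex mat" where
  "head_mat = mat nA nV (\<lambda>(a, w). if snd (arc ! a) = vtx ! w then 1 else 0)"

definition tail_mat :: "complex mat" where
  "tail_mat = mat nV nA (\<lambda>(w, a). if fst (arc ! a) = vtx ! w then 1 else 0)"

definition rev_mat :: "complex mat" where
  "rev_mat = mat nA nA (\<lambda>(a, b). if arc ! b = prod.swap (arc ! a) then 1 else 0)"

definition sign_mat :: "complex mat" where
  "sign_mat = mat_diag nA (\<lambda>a. if fst (arc ! a) < snd (arc ! a) then 1 else -1)"

definition nb_mat :: "complex mat" where "nb_mat = head_mat * tail_mat - rev_mat"

lemma mat_carriers [simp]:
  "adj_mat \<in> carrier_mat nV nV" "head_mat \<in> carrier_mat nA nV" "tail_mat \<in> carrier_mat nV nA"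
  "rev_mat \<in> carrier_mat nA nA" "sign_mat \<in> carrier_mat nA nA"
  unfolding adj_mat_def head_mat_def tail_mat_def rev_mat_def sign_mat_def by auto

lemma mat_dims [simp]:
  "dim_row adj_mat = nV" "dim_col adj_mat = nV" "dim_row head_mat = nA" "dim_col head_mat = nV"
  "dim_row tail_mat = nV" "dim_col tail_mat = nA" "dim_row rev_mat = nA" "dim_col rev_mat = nA"
  "dim_row sign_mat = nA" "dim_col sign_mat = nA"
  unfolding adj_mat_def head_mat_def tail_mat_def rev_mat_def sign_mat_def mat_diag_def by auto

lemma nb_mat_carrier [simp]: "nb_mat \<in> carrier_mat nA nA"
  unfolding nb_mat_def by (intro minus_carrier_mat mult_carrier_mat[of _ nA nV]) simp_all

lemma head_tail: "head_mat * tail_mat = mat nA nA (\<lambda>(a, b). if snd (arc ! a) = fst (arc ! b) then 1 else 0)"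
proof (rule eq_matI)
  fix a b assume "a < dim_row (mat nA nA (\<lambda>(a, b). if snd (arc ! a) = fst (arc ! b) then 1 else (0 :: complex)))"
    and "b < dim_col (mat nA nA (\<lambda>(a, b). if snd (arc ! a) = fst (arc ! b) then 1 else (0 :: complex)))"
  then have a: "a < nA" and b: "b < nA" by auto
  have "(head_mat * tail_mat) $$ (a, b) =
      (\<Sum>w\<in>{0..<nV}. if vtx ! w = snd (arc ! a) then (if snd (arc ! a) = fst (arc ! b) then 1 else 0) else 0)"
    using a b unfolding head_mat_def tail_mat_def by (auto simp: scalar_prod_def intro!: sum.cong)
  also have "\<dots> = (if snd (arc ! a) = fst (arc ! b) then 1 else 0)"
    unfolding sum_vtx_delta using edgeD(2)[OF arc_edge[OF a]] by simp
  finally show "(head_mat * tail_mat) $$ (a, b) =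
      mat nA nA (\<lambda>(a, b). if snd (arc ! a) = fst (arc ! b) then 1 else 0) $$ (a, b)"
    using a b by simp
qed auto

lemma tail_head: "tail_mat * head_mat = adj_mat"
proof (rule eq_matI)
  fix i j assume "i < dim_row adj_mat" and "j < dim_col adj_mat"
  then have i: "i < nV" and j: "j < nV" by auto
  have "(tail_mat * head_mat) $$ (i, j) = (\<Sum>a\<in>{0..<nA}. if arc ! a = (vtx ! i, vtx ! j) then 1 else 0)"
    using i j unfolding head_mat_def tail_mat_def
    by (auto simp: scalar_prod_def prod_eq_iff intro!: sum.cong split: prod.splits)
  also have "\<dots> = adj_mat $$ (i, j)"
    unfolding sum_arc_delta using i j by (simp add: adj_mat_def arcs_def vtx_in_V)
  finally show "(tail_mat * head_mat) $$ (i, j) = adj_mat $$ (i, j)" .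
qed auto

lemma tail_rev: "tail_mat * rev_mat = mat nV nA (\<lambda>(w, b). if snd (arc ! b) = vtx ! w then 1 else 0)"
proof (rule eq_matI)
  fix w b assume "w < dim_row (mat nV nA (\<lambda>(w, b). if snd (arc ! b) = vtx ! w then 1 else (0 :: complex)))"
    and "b < dim_col (mat nV nA (\<lambda>(w, b). if snd (arc ! b) = vtx ! w then 1 else (0 :: complex)))"
  then have w: "w < nV" and b: "b < nA" by auto
  have "(tail_mat * rev_mat) $$ (w, b) =
      (\<Sum>a\<in>{0..<nA}. if arc ! a = prod.swap (arc ! b) then (if snd (arc ! b) = vtx ! w then 1 else 0) else 0)"
    using w b unfolding rev_mat_def tail_mat_def
    by (auto simp: scalar_prod_def prod_eq_iff intro!: sum.cong)
  also have "\<dots> = (if snd (arc ! b) = vtx ! w then 1 else 0)"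
    unfolding sum_arc_delta using swap_arc_in_arcs[OF arc_in_arcs[OF b]] by simp
  finally show "(tail_mat * rev_mat) $$ (w, b) =
      mat nV nA (\<lambda>(w, b). if snd (arc ! b) = vtx ! w then 1 else 0) $$ (w, b)"
    using w b by simp
qed auto

lemma tail_rev_head: "tail_mat * rev_mat * head_mat = of_nat d \<cdot>\<^sub>m 1\<^sub>m nV"
proof (rule eq_matI)
  fix i j assume "i < dim_row (of_nat d \<cdot>\<^sub>m 1\<^sub>m nV :: complex mat)"
    and "j < dim_col (of_nat d \<cdot>\<^sub>m 1\<^sub>m nV :: complex mat)"
  then have i: "i < nV" and j: "j < nV" by auto
  have "(tail_mat * rev_mat * head_mat) $$ (i, j) =
      (\<Sum>b\<in>{0..<nA}. if snd (arc ! b) = vtx ! i \<and> i = j then 1 else 0)"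
    using i j unfolding tail_rev head_mat_def by (auto simp: scalar_prod_def vtx_eq_iff intro!: sum.cong)
  also have "\<dots> = (\<Sum>x\<in>arcs V E. if snd x = vtx ! i \<and> i = j then 1 else 0)"
    by (rule sum_arc)
  also have "\<dots> = (if i = j then of_nat (card {x \<in> arcs V E. snd x = vtx ! i}) else 0)"
    using finite_arcs by (simp add: sum.If_cases Collect_conj_eq Int_commute)
  also have "\<dots> = (of_nat d \<cdot>\<^sub>m 1\<^sub>m nV :: complex mat) $$ (i, j)"
    using i j card_arcs_into[OF vtx_in_V[OF i]] by auto
  finally show "(tail_mat * rev_mat * head_mat) $$ (i, j)
      = (of_nat d \<cdot>\<^sub>m 1\<^sub>m nV :: complex mat) $$ (i, j)" .
qed auto

lemma rev_rev: "rev_mat * rev_mat = 1\<^sub>m nA"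
proof (rule eq_matI)
  fix a b assume "a < dim_row (1\<^sub>m nA :: complex mat)" and "b < dim_col (1\<^sub>m nA :: complex mat)"
  then have a: "a < nA" and b: "b < nA" by auto
  have "(rev_mat * rev_mat) $$ (a, b) =
      (\<Sum>c\<in>{0..<nA}. if arc ! c = prod.swap (arc ! a) then (if arc ! b = arc ! a then 1 else 0) else 0)"
    using a b unfolding rev_mat_def by (auto simp: scalar_prod_def intro!: sum.cong split: prod.splits)
  also have "\<dots> = (if arc ! b = arc ! a then 1 else 0)"
    unfolding sum_arc_delta using swap_arc_in_arcs[OF arc_in_arcs[OF a]] by simp
  finally show "(rev_mat * rev_mat) $$ (a, b) = (1\<^sub>m nA :: complex mat) $$ (a, b)"
    using a b arc_eq_iff[OF a b] by auto
qed auto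

lemma sign_sign: "sign_mat * sign_mat = 1\<^sub>m nA"
  unfolding sign_mat_def mat_diag_diag mat_diag_one[symmetric]
  by (rule arg_cong[where f = "mat_diag nA"]) auto

lemma sign_rev_sign: "sign_mat * rev_mat * sign_mat = - rev_mat"
proof -
  define sg where "sg a = (if fst (arc ! a) < snd (arc ! a) then 1 else - 1 :: complex)" for a
  have "sign_mat * rev_mat * sign_mat = mat nA nA (\<lambda>(a, b). sg a * rev_mat $$ (a, b) * sg b)"
    unfolding sign_mat_def sg_def[symmetric]
    by (simp add: mat_diag_mult_left[of _ nA nA] mat_diag_mult_right[of _ nA nA]) (intro eq_matI; simp)
  also have "\<dots> = - rev_mat"
  proof (rule eq_matI)
    fix a b assume "a < dim_row (- rev_mat)" "b < dim_col (- rev_mat)"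
    then have "a < nA" "b < nA" by auto
    then show "mat nA nA (\<lambda>(a, b). sg a * rev_mat $$ (a, b) * sg b) $$ (a, b) = (- rev_mat) $$ (a, b)"
      using edgeD(4)[OF arc_edge[of a]] unfolding rev_mat_def sg_def by (cases "arc ! a") auto
  qed auto
  finally show ?thesis .
qed

lemma arc_matrix_edge: "arc_matrix V E (P_edge E) = (1 / of_nat d) \<cdot>\<^sub>m (head_mat * tail_mat)"
  unfolding arc_matrix_def Let_def arc_def[symmetric] head_tail
  by (rule eq_matI) (auto simp: arc P_edge_def deg_eq edgeD(1,2)[OF arc_edge])

lemma arc_matrix_nb: "arc_matrix V E (P_nb E) = (1 / (of_nat d - 1)) \<cdot>\<^sub>m nb_mat"
proof -
  have "nb_mat =
      mat nA nA (\<lambda>(a, b). if snd (arc ! a) = fst (arc ! b) \<and> snd (arc ! b) \<noteq> fst (arc ! a) then 1 else 0)"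
    unfolding nb_mat_def head_tail rev_mat_def by (rule eq_matI) (auto simp: prod_eq_iff)
  then show ?thesis
    unfolding arc_matrix_def Let_def arc_def[symmetric]
    by (intro eq_matI) (auto simp: arc P_nb_def deg_eq edgeD(1,2)[OF arc_edge])
qed

end

section \<open>The adjacency spectrum\<close>

context regular_graph
begin

lemma adj_mat_hermitian: "hermitian adj_mat"
  by (rule hermitianI[OF mat_carriers(1)]) (simp add: adj_mat_def edge_commute)

lemma adj_mat_mult_vec:
  "v \<in> carrier_vec nV \<Longrightarrow> i < nV \<Longrightarrow>
    (adj_mat *\<^sub>v v) $ i = (\<Sum>j\<in>{0..<nV}. if E (vtx ! i) (vtx ! j) then v $ j else 0)"
  unfolding adj_mat_def by (auto simp: scalar_prod_def intro!: sum.cong)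

lemma mat_trace_adj_mat: "mat_trace adj_mat = 0"
  unfolding mat_trace_def by (auto simp: adj_mat_def intro!: sum.neutral dest: edgeD(4))

lemma adj_eigenvalue_norm_le: "eigenvector adj_mat v e \<Longrightarrow> cmod e \<le> real d"
proof (rule eigenvalue_norm_le_row_sum[OF mat_carriers(1)])
  fix i assume "i < nV"
  then have "(\<Sum>j\<in>{0..<nV}. cmod (adj_mat $$ (i, j))) =
      (\<Sum>j\<in>{0..<nV}. if E (vtx ! i) (vtx ! j) then 1 else 0)"
    by (intro sum.cong) (auto simp: adj_mat_def)
  then show "(\<Sum>j\<in>{0..<nV}. cmod (adj_mat $$ (i, j))) \<le> real d"
    using sum_neighbours[OF vtx_in_V[OF \<open>i < nV\<close>], where 'a = real] by simp
qed

definition ones :: "complex vec" where "ones = vec nV (\<lambda>_. 1)"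

lemma ones_carrier [simp]: "ones \<in> carrier_vec nV"
  unfolding ones_def by simp

lemma adj_mat_mult_ones: "adj_mat *\<^sub>v ones = of_nat d \<cdot>\<^sub>v ones"
proof (rule eq_vecI)
  fix i assume "i < dim_vec (of_nat d \<cdot>\<^sub>v ones)"
  then have i: "i < nV" by (simp add: ones_def)
  have "(adj_mat *\<^sub>v ones) $ i = (\<Sum>j\<in>{0..<nV}. if E (vtx ! i) (vtx ! j) then ones $ j else 0)"
    using i by (intro adj_mat_mult_vec) (simp_all add: ones_def)
  also have "\<dots> = (\<Sum>j\<in>{0..<nV}. if E (vtx ! i) (vtx ! j) then 1 else 0)"
    by (intro sum.cong) (auto simp: ones_def)
  also have "\<dots> = of_nat d" by (rule sum_neighbours[OF vtx_in_V[OF i]])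
  finally show "(adj_mat *\<^sub>v ones) $ i = (of_nat d \<cdot>\<^sub>v ones) $ i" using i by (simp add: ones_def)
qed (simp add: ones_def)

lemma adj_root_real_le:
  assumes "poly (char_poly adj_mat) e = 0"
  shows "e = of_real (Re e)" and "Re e \<le> real d"
proof -
  obtain v where v: "eigenvector adj_mat v e"
    using assms eigenvalue_root_char_poly[OF mat_carriers(1)] unfolding eigenvalue_def by blast
  have "Im (cnj e) = Im e" using hermitian_eigenvalue_real[OF adj_mat_hermitian mat_carriers(1) v] by simp
  then show "e = of_real (Re e)" by (intro complex_eqI) auto
  show "Re e \<le> real d" using adj_eigenvalue_norm_le[OF v] abs_Re_le_cmod[of e] by linarith
qed

lemma adj_char_poly_real:
  obtains mus :: "real list" where "char_poly adj_mat = (\<Prod>mu\<leftarrow>mus. [:- of_real mu, 1:])"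
    "length mus = nV" "\<And>mu. mu \<in> set mus \<Longrightarrow> mu \<le> real d" "sum_list mus = 0"
proof -
  obtain es where es: "char_poly adj_mat = (\<Prod>e\<leftarrow>es. [:-e, 1:])" and len: "length es = nV"
    using char_poly_factorized[OF mat_carriers(1)] by auto
  have root: "poly (char_poly adj_mat) e = 0" if "e \<in> set es" for e
    unfolding es using that by (induct es) (auto simp: poly_prod_list)
  define mus where "mus = map Re es"
  have real: "es = map of_real mus"
    unfolding mus_def map_map comp_def
    by (rule map_idI[symmetric]) (rule adj_root_real_le(1)[OF root, symmetric])
  show ?thesis
  proof
    show "char_poly adj_mat = (\<Prod>mu\<leftarrow>mus. [:- of_real mu, 1:])" unfolding es real by (simp add: comp_def)
    show "length mus = nV" using len by (simp add: mus_def)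
    show "mu \<le> real d" if "mu \<in> set mus" for mu
      using that adj_root_real_le(2)[OF root] unfolding mus_def by auto
    have "sum_list es = 0"
      using sum_eigenvalues_eq_mat_trace[OF mat_carriers(1) es] mat_trace_adj_mat by simp
    then have "of_real (sum_list mus) = (0 :: complex)"
      unfolding real by (simp add: of_real_sum_list_map[of id, simplified])
    then show "sum_list mus = 0" by (simp only: of_real_eq_0_iff)
  qed
qed

end

locale connected_regular_graph = regular_graph +
  assumes connected: "connected_graph V E"
begin

lemma nV_pos: "nV > 0"
  using connected finite_V unfolding connected_graph_def by (simp add: card_gt_0_iff)

text \<open>Maximum principle: the set of indices where a harmonic function attains its maximum is
  closed under adjacency, hence contains every vertex reachable from a maximiser.\<close>

lemma harmonic_const:
  fixes x :: "nat \<Rightarrow> real"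
  assumes harmonic: "\<And>i. i < nV \<Longrightarrow> real d * x i = (\<Sum>j\<in>{0..<nV}. if E (vtx ! i) (vtx ! j) then x j else 0)"
    and i: "i < nV" and j: "j < nV"
  shows "x i = x j"
proof -
  define m where "m = Max (x ` {0..<nV})"
  have le_m: "x k \<le> m" if "k < nV" for k unfolding m_def using that by simp
  have "m \<in> x ` {0..<nV}" unfolding m_def using nV_pos by (intro Max_in) auto
  then obtain i0 where i0: "i0 < nV" "x i0 = m" by auto
  have max_closed: "x k = m" if k: "i < nV" "x i = m" "k < nV" "E (vtx ! i) (vtx ! k)" for i k
  proof -
    have "(\<Sum>j\<in>{0..<nV}. if E (vtx ! i) (vtx ! j) then m - x j else 0) =
        (\<Sum>j\<in>{0..<nV}. (if E (vtx ! i) (vtx ! j) then 1 else 0) * m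
          - (if E (vtx ! i) (vtx ! j) then x j else 0))"
      by (intro sum.cong) auto
    also have "\<dots> = real d * m - (\<Sum>j\<in>{0..<nV}. if E (vtx ! i) (vtx ! j) then x j else 0)"
      using sum_neighbours[OF vtx_in_V[OF k(1)], where 'a = real]
      by (simp add: sum_subtractf sum_distrib_right[symmetric])
    also have "\<dots> = 0" using harmonic[OF k(1)] k(2) by simp
    finally have "\<forall>j\<in>{0..<nV}. (if E (vtx ! i) (vtx ! j) then m - x j else 0) = 0"
      by (subst sum_nonneg_eq_0_iff[symmetric]) (auto simp: le_m)
    then show ?thesis using k by (metis atLeastLessThan_iff eq_iff_diff_eq_0 zero_le)
  qed
  have reach: "\<exists>k<nV. vtx ! k = v \<and> x k = m" if "E\<^sup>*\<^sup>* (vtx ! i0) v" for v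
    using that
  proof (induct rule: rtranclp_induct)
    case (step u w)
    then obtain k where k: "k < nV" "vtx ! k = u" "x k = m" by blast
    obtain l where l: "l < nV" "vtx ! l = w"
      using edgeD(2)[OF step(2)] vtx by (metis in_set_conv_nth)
    then show ?case using step(2) k max_closed[OF k(1) k(3) l(1)] by auto
  qed (use i0 in auto)
  have "x k = m" if "k < nV" for k
    using reach[of "vtx ! k"] connected vtx_in_V[OF i0(1)] vtx_in_V[OF that] vtx_eq_iff that
    unfolding connected_graph_def by metis
  then show ?thesis using i j by simp
qed

lemma adj_eigenvector_const:
  assumes v: "v \<in> carrier_vec nV" and ev: "adj_mat *\<^sub>v v = of_nat d \<cdot>\<^sub>v v"
  shows "v = v $ 0 \<cdot>\<^sub>v ones"
proof -
  have eq: "of_nat d * v $ i = (\<Sum>j\<in>{0..<nV}. if E (vtx ! i) (vtx ! j) then v $ j else 0)"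
    if i: "i < nV" for i
    using arg_cong[OF ev, of "\<lambda>w. w $ i"] adj_mat_mult_vec[OF v i] v i by simp
  have re: "real d * Re (v $ i) = (\<Sum>j\<in>{0..<nV}. if E (vtx ! i) (vtx ! j) then Re (v $ j) else 0)"
    and im: "real d * Im (v $ i) = (\<Sum>j\<in>{0..<nV}. if E (vtx ! i) (vtx ! j) then Im (v $ j) else 0)"
    if "i < nV" for i
  proof -
    have "real d * Re (v $ i) = Re (of_nat d * v $ i)" "real d * Im (v $ i) = Im (of_nat d * v $ i)"
      by simp_all
    then show "real d * Re (v $ i) = (\<Sum>j\<in>{0..<nV}. if E (vtx ! i) (vtx ! j) then Re (v $ j) else 0)"
      and "real d * Im (v $ i) = (\<Sum>j\<in>{0..<nV}. if E (vtx ! i) (vtx ! j) then Im (v $ j) else 0)"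
      unfolding eq[OF that] Re_sum Im_sum by (auto intro!: sum.cong)
  qed
  have const: "v $ i = v $ 0" if "i < nV" for i
  proof (rule complex_eqI)
    show "Re (v $ i) = Re (v $ 0)" by (rule harmonic_const[OF re that nV_pos])
    show "Im (v $ i) = Im (v $ 0)" by (rule harmonic_const[OF im that nV_pos])
  qed
  show ?thesis
  proof (rule eq_vecI)
    fix i assume "i < dim_vec (v $ 0 \<cdot>\<^sub>v ones)"
    then show "v $ i = (v $ 0 \<cdot>\<^sub>v ones) $ i" using const[of i] by (simp add: ones_def)
  qed (use v in \<open>simp add: ones_def\<close>)
qed

lemma order_d_char_poly_adj: "Polynomial.order (of_nat d) (char_poly adj_mat) = 1"
proof -
  let ?C = "char_matrix adj_mat (of_nat d)"
  have "?C *\<^sub>v ones = 0\<^sub>v nV"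
    unfolding char_matrix_mult_vec[OF mat_carriers(1) ones_carrier] adj_mat_mult_ones
    by (intro eq_vecI) (auto simp: ones_def)
  then have ones_ker: "ones \<in> mat_kernel ?C" by (intro mat_kernelI[of _ nV nV]) auto
  have "kernel_dim ?C \<le> 1"
  proof (rule kernel_dim_le_one[of _ nV, OF _ ones_ker])
    fix v assume "v \<in> mat_kernel ?C"
    then have v: "v \<in> carrier_vec nV" and zero: "adj_mat *\<^sub>v v - of_nat d \<cdot>\<^sub>v v = 0\<^sub>v nV"
      using mat_kernelD[of ?C nV nV v] char_matrix_mult_vec[OF mat_carriers(1)] by auto
    have "(adj_mat *\<^sub>v v) $ i = (of_nat d \<cdot>\<^sub>v v) $ i" if "i < nV" for i
      using arg_cong[OF zero, of "\<lambda>w. w $ i"] that v by simp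
    then have "adj_mat *\<^sub>v v = of_nat d \<cdot>\<^sub>v v" using v by (intro eq_vecI) auto
    with v show "\<exists>c. v = c \<cdot>\<^sub>v ones" using adj_eigenvector_const by blast
  qed simp
  then have le: "Polynomial.order (of_nat d) (char_poly adj_mat) \<le> 1"
    using hermitian_order_char_poly[OF adj_mat_hermitian mat_carriers(1)] by simp
  have "ones $ 0 \<noteq> 0\<^sub>v nV $ 0" using nV_pos by (simp add: ones_def)
  then have "ones \<noteq> 0\<^sub>v nV" by metis
  then have "eigenvector adj_mat ones (of_nat d)"
    unfolding eigenvector_def using adj_mat_mult_ones by simp
  then have "poly (char_poly adj_mat) (of_nat d) = 0"
    using eigenvalue_root_char_poly[OF mat_carriers(1)] unfolding eigenvalue_def by blast
  moreover have "char_poly adj_mat \<noteq> 0" using degree_monic_char_poly[OF mat_carriers(1)] by auto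
  ultimately show ?thesis using le order_root by (metis le_antisym less_one not_le)
qed

lemma adjacency_spectrum:
  obtains mus :: "real list" where
    "char_poly adj_mat = [:- of_nat d, 1:] * (\<Prod>mu\<leftarrow>mus. [:- of_real mu, 1:])"
    "length mus = nV - 1" "\<And>mu. mu \<in> set mus \<Longrightarrow> mu < real d" "sum_list mus = - real d"
proof -
  obtain mus0 where mus0: "char_poly adj_mat = (\<Prod>mu\<leftarrow>mus0. [:- of_real mu, 1:])"
    and len: "length mus0 = nV" and le: "\<And>mu. mu \<in> set mus0 \<Longrightarrow> mu \<le> real d"
    and sum: "sum_list mus0 = 0"
    using adj_char_poly_real by blast
  have "count (mset (map of_real mus0)) (of_nat d :: complex) = 1"
    using order_d_char_poly_adj mus0 order_prod_linear_factors[of "of_nat d :: complex" "map of_real mus0"]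
    by (simp add: comp_def)
  moreover have "count (mset (map of_real mus0)) (of_nat d :: complex) = count (mset mus0) (real d)"
    by (induct mus0) (auto, metis of_real_eq_iff of_real_of_nat_eq)
  ultimately have count: "count (mset mus0) (real d) = 1" by simp
  then have d_in: "real d \<in> set mus0" using count_mset_0_iff[of mus0 "real d"] by auto
  define mus where "mus = remove1 (real d) mus0"
  have "count (mset mus) (real d) = 0" using count by (simp add: mus_def)
  then have d_notin: "real d \<notin> set mus" by (simp add: count_mset_0_iff)
  show ?thesis
  proof
    show "char_poly adj_mat = [:- of_nat d, 1:] * (\<Prod>mu\<leftarrow>mus. [:- of_real mu, 1:])"
      unfolding mus0 prod_list_map_remove1[OF d_in] mus_def by simp
    show "length mus = nV - 1" using len d_in by (simp add: mus_def length_remove1)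
    show "mu < real d" if "mu \<in> set mus" for mu
    proof -
      have "mu \<in> set mus0" using that set_remove1_subset[of "real d" mus0] unfolding mus_def by auto
      then have "mu \<le> real d" by (rule le)
      moreover have "mu \<noteq> real d" using that d_notin by blast
      ultimately show ?thesis by simp
    qed
    show "sum_list mus = - real d"
      using sum_list_map_remove1[OF d_in, of id] sum unfolding mus_def by simp
  qed
qed

end

section \<open>Characteristic polynomials of the two arc chains\<close>

context regular_graph
begin

lemma char_poly_edge_chain:
  assumes d: "d > 0" and es: "char_poly adj_mat = (\<Prod>e\<leftarrow>es. [:-e, 1:])"
  shows "[:0, 1:] ^ nV * char_poly (arc_matrix V E (P_edge E))
    = [:0, 1:] ^ nA * (\<Prod>e\<leftarrow>es. [:- (e / of_nat d), 1:])"
proof (rule poly_ext)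
  fix x :: complex
  define X where "X = (1 / of_nat d) \<cdot>\<^sub>m head_mat"
  have X: "X \<in> carrier_mat nA nV" unfolding X_def by simp
  have Pe: "arc_matrix V E (P_edge E) = X * tail_mat"
    unfolding arc_matrix_edge X_def by (simp add: mult_smult_assoc_mat[of _ nA nV _ nA])
  have "tail_mat * X = (1 / of_nat d) \<cdot>\<^sub>m adj_mat"
    unfolding X_def tail_head[symmetric] by (simp add: mult_smult_distrib[of _ nV nA _ nV])
  then have "x ^ nV * det (x \<cdot>\<^sub>m 1\<^sub>m nA - X * tail_mat) = x ^ nA * (\<Prod>e\<leftarrow>es. x - 1 / of_nat d * e)"
    using det_smult_minus_mult_commute[OF X mat_carriers(3), of x]
      det_smult_minus_smult_eq_prod[OF mat_carriers(1) es] by simp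
  then show "poly ([:0, 1:] ^ nV * char_poly (arc_matrix V E (P_edge E))) x
      = poly ([:0, 1:] ^ nA * (\<Prod>e\<leftarrow>es. [:- (e / of_nat d), 1:])) x"
    unfolding poly_mult poly_power Pe poly_char_poly_eq_det[OF mult_carrier_mat[OF X mat_carriers(3)]]
    by (simp add: poly_prod_list comp_def)
qed

text \<open>For \<open>B = Q R - J\<close> one has
  \<open>(z I - J) (z I - B) = (z\<^sup>2 - 1) I - (z I - J) Q R\<close>, and Sylvester's identity applies with
  \<open>R (z I - J) Q = z A - d I\<close>. Only the square of \<open>det (z I - J)\<close> is known, hence the squared form.\<close>

lemma ihara_bass_product:
  "(z\<^sup>2 - 1) ^ nV * (det (z \<cdot>\<^sub>m 1\<^sub>m nA - rev_mat) * det (z \<cdot>\<^sub>m 1\<^sub>m nA - nb_mat))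
    = (z\<^sup>2 - 1) ^ nA * det ((z\<^sup>2 + of_nat d - 1) \<cdot>\<^sub>m 1\<^sub>m nV - z \<cdot>\<^sub>m adj_mat)"
proof -
  define s where "s = z\<^sup>2 - 1"
  define Z where "Z = z \<cdot>\<^sub>m 1\<^sub>m nA - rev_mat"
  define X where "X = Z * head_mat"
  have Z: "Z \<in> carrier_mat nA nA" unfolding Z_def by (simp add: minus_carrier_mat)
  have X: "X \<in> carrier_mat nA nV" unfolding X_def using Z by simp
  have QR: "head_mat * tail_mat \<in> carrier_mat nA nA" by (rule mult_carrier_mat[of _ nA nV]) simp_all
  have JQ: "rev_mat * head_mat \<in> carrier_mat nA nV" by (rule mult_carrier_mat[of _ nA nA]) simp_all
  have "z \<cdot>\<^sub>m 1\<^sub>m nA - nb_mat = (z \<cdot>\<^sub>m 1\<^sub>m nA + rev_mat) - head_mat * tail_mat"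
    unfolding nb_mat_def using QR by (intro eq_matI) auto
  then have "Z * (z \<cdot>\<^sub>m 1\<^sub>m nA - nb_mat) = Z * (z \<cdot>\<^sub>m 1\<^sub>m nA + rev_mat) - X * tail_mat"
    unfolding X_def using Z QR
    by (simp add: mult_minus_distrib_mat[of _ nA nA _ nA] assoc_mult_mat[OF Z mat_carriers(2,3)])
  also have "Z * (z \<cdot>\<^sub>m 1\<^sub>m nA + rev_mat) = s \<cdot>\<^sub>m 1\<^sub>m nA"
    unfolding Z_def s_def by (rule smult_minus_mult_smult_plus_involution[OF mat_carriers(4) rev_rev])
  finally have left: "Z * (z \<cdot>\<^sub>m 1\<^sub>m nA - nb_mat) = s \<cdot>\<^sub>m 1\<^sub>m nA - X * tail_mat" .
  have "tail_mat * X = z \<cdot>\<^sub>m (tail_mat * head_mat) - tail_mat * rev_mat * head_mat"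
    unfolding X_def Z_def using JQ
    by (simp add: assoc_mult_mat[OF mat_carriers(3,4,2)] minus_mult_distrib_mat[of _ nA nA _ _ nV]
        mult_minus_distrib_mat[of _ nV nA _ nV] mult_smult_assoc_mat[of _ nA nA _ nV]
        mult_smult_distrib[of _ nV nA _ nV])
  then have right: "s \<cdot>\<^sub>m 1\<^sub>m nV - tail_mat * X = (z\<^sup>2 + of_nat d - 1) \<cdot>\<^sub>m 1\<^sub>m nV - z \<cdot>\<^sub>m adj_mat"
    unfolding tail_head tail_rev_head s_def by (intro eq_matI) auto
  show ?thesis
    using det_smult_minus_mult_commute[OF X mat_carriers(3), of s] det_mult[OF Z nb_mat_carrier[THEN
      minus_carrier_mat[of _ nA nA "z \<cdot>\<^sub>m 1\<^sub>m nA"]]] left right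
    unfolding Z_def[symmetric] s_def[symmetric] by simp
qed

lemma ihara_bass:
  assumes z: "z\<^sup>2 \<noteq> 1"
  shows "(z\<^sup>2 - 1) ^ (2 * nV) * det (z \<cdot>\<^sub>m 1\<^sub>m nA - nb_mat) ^ 2
       = (z\<^sup>2 - 1) ^ nA * det ((z\<^sup>2 + of_nat d - 1) \<cdot>\<^sub>m 1\<^sub>m nV - z \<cdot>\<^sub>m adj_mat) ^ 2"
proof -
  define s where "s = z\<^sup>2 - 1"
  have det_rev: "det (z \<cdot>\<^sub>m 1\<^sub>m nA - rev_mat) ^ 2 = s ^ nA"
    unfolding s_def
    by (rule det_smult_minus_involution_square[OF mat_carriers(4,5) rev_rev sign_sign sign_rev_sign])
  have square: "Q * (P\<^sup>2 * b\<^sup>2) = Q * (Q * c\<^sup>2)" if "P * (a * b) = Q * c" and "a\<^sup>2 = Q"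
    for P Q a b c :: complex
  proof -
    have "Q * (Q * c\<^sup>2) = (P * (a * b))\<^sup>2" using that(1) by (simp add: power2_eq_square)
    also have "\<dots> = a\<^sup>2 * (P\<^sup>2 * b\<^sup>2)" by (simp add: power_mult_distrib)
    finally show ?thesis using that(2) by (metis mult.commute)
  qed
  have "s ^ (2 * nV) = (s ^ nV)\<^sup>2" by (simp add: power_mult[symmetric] mult.commute)
  moreover have "s ^ nA \<noteq> 0" using z unfolding s_def by simp
  ultimately show ?thesis
    using square[OF ihara_bass_product[of z, folded s_def] det_rev] z unfolding s_def by simp
qed

lemma poly_char_poly_nb_chain:
  assumes d: "d \<noteq> 1"
  defines "c \<equiv> of_nat d - (1 :: complex)"
  shows "c ^ nA * poly (char_poly (arc_matrix V E (P_nb E))) x = det ((c * x) \<cdot>\<^sub>m 1\<^sub>m nA - nb_mat)"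
proof -
  have c: "c \<noteq> 0" using d of_nat_eq_1_iff[where 'a = complex, of d] unfolding c_def by auto
  have "x \<cdot>\<^sub>m 1\<^sub>m nA - (1 / c) \<cdot>\<^sub>m nb_mat = (1 / c) \<cdot>\<^sub>m ((c * x) \<cdot>\<^sub>m 1\<^sub>m nA - nb_mat)"
    using c carrier_matD[OF nb_mat_carrier] by (intro eq_matI) (auto simp: field_simps)
  then have "poly (char_poly (arc_matrix V E (P_nb E))) x
      = (1 / c) ^ nA * det ((c * x) \<cdot>\<^sub>m 1\<^sub>m nA - nb_mat)"
    unfolding arc_matrix_nb c_def[symmetric]
    using poly_char_poly_eq_det[of "(1 / c) \<cdot>\<^sub>m nb_mat" nA x] carrier_matD[OF nb_mat_carrier]
    by (simp add: det_smult)
  then show ?thesis using c by (simp add: field_simps)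
qed

lemma det_adj_quadratic_pencil:
  assumes d: "d \<noteq> 1" and es: "char_poly adj_mat = (\<Prod>e\<leftarrow>es. [:-e, 1:])"
  defines "c \<equiv> of_nat d - (1 :: complex)"
  shows "det (((c * x)\<^sup>2 + of_nat d - 1) \<cdot>\<^sub>m 1\<^sub>m nV - (c * x) \<cdot>\<^sub>m adj_mat)
    = c ^ (2 * nV) * (\<Prod>e\<leftarrow>es. x\<^sup>2 - e / c * x + 1 / c)"
proof -
  have c: "c \<noteq> 0" using d of_nat_eq_1_iff[where 'a = complex, of d] unfolding c_def by auto
  have "det (((c * x)\<^sup>2 + of_nat d - 1) \<cdot>\<^sub>m 1\<^sub>m nV - (c * x) \<cdot>\<^sub>m adj_mat)
      = (\<Prod>e\<leftarrow>es. c\<^sup>2 * (x\<^sup>2 - e / c * x + 1 / c))"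
    unfolding det_smult_minus_smult_eq_prod[OF mat_carriers(1) es]
    by (rule arg_cong[where f = prod_list], rule map_cong)
      (use c in \<open>auto simp: c_def field_simps power2_eq_square\<close>)
  also have "\<dots> = c ^ (2 * nV) * (\<Prod>e\<leftarrow>es. x\<^sup>2 - e / c * x + 1 / c)"
    unfolding length_char_poly_linear_factors[OF mat_carriers(1) es, symmetric]
    by (induct es) (simp_all add: power_mult power2_eq_square)
  finally show ?thesis .
qed

lemma char_poly_nb_chain:
  assumes d: "d \<noteq> 1" and es: "char_poly adj_mat = (\<Prod>e\<leftarrow>es. [:-e, 1:])"
  defines "c \<equiv> of_nat d - (1 :: complex)"
  shows "[:- (1 / c\<^sup>2), 0, 1:] ^ (2 * nV) * char_poly (arc_matrix V E (P_nb E)) ^ 2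
    = [:- (1 / c\<^sup>2), 0, 1:] ^ nA * (\<Prod>e\<leftarrow>es. [:1 / c, - (e / c), 1:]) ^ 2"
proof (rule poly_eqI_infinite[of "UNIV - {1 / c, - (1 / c)}"])
  show "infinite (UNIV - {1 / c, - (1 / c)})" by (simp add: infinite_UNIV_char_0)
  fix x assume x: "x \<in> UNIV - {1 / c, - (1 / c)}"
  have c: "c \<noteq> 0" using d of_nat_eq_1_iff[where 'a = complex, of d] unfolding c_def by auto
  define w where "w = x\<^sup>2 - 1 / c\<^sup>2"
  define Q where "Q = (\<Prod>e\<leftarrow>es. x\<^sup>2 - e / c * x + 1 / c)"
  define \<chi> where "\<chi> = poly (char_poly (arc_matrix V E (P_nb E))) x"
  have cw: "(c * x)\<^sup>2 - 1 = c\<^sup>2 * w" unfolding w_def using c by (simp add: field_simps power2_eq_square)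
  have "w \<noteq> 0"
  proof
    assume "w = 0"
    then have "(x - 1 / c) * (x + 1 / c) = 0" unfolding w_def by (simp add: algebra_simps power2_eq_square)
    then have "x = 1 / c \<or> x = - (1 / c)" by (simp add: add_eq_0_iff2)
    then show False using x by blast
  qed
  then have "(c * x)\<^sup>2 \<noteq> 1" using cw c by (metis mult_eq_0_iff right_minus_eq zero_eq_power2)
  from ihara_bass[OF this]
  have "(c\<^sup>2 * w) ^ (2 * nV) * (c ^ nA * \<chi>)\<^sup>2 = (c\<^sup>2 * w) ^ nA * (c ^ (2 * nV) * Q)\<^sup>2"
    unfolding cw det_adj_quadratic_pencil[OF d es, folded c_def]
      poly_char_poly_nb_chain[OF d, folded c_def, symmetric] \<chi>_def[symmetric] Q_def[symmetric] .
  then have "(c ^ nA * c ^ (2 * nV))\<^sup>2 * (w ^ (2 * nV) * \<chi>\<^sup>2)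
      = (c ^ nA * c ^ (2 * nV))\<^sup>2 * (w ^ nA * Q\<^sup>2)"
    by (simp add: power_mult_distrib power_mult[symmetric] ac_simps)
  then have "w ^ (2 * nV) * \<chi>\<^sup>2 = w ^ nA * Q\<^sup>2" using c by simp
  moreover have "poly [:- (1 / c\<^sup>2), 0, 1:] x = w" unfolding w_def by (simp add: power2_eq_square)
  moreover have "poly (\<Prod>e\<leftarrow>es. [:1 / c, - (e / c), 1:]) x = Q"
    unfolding Q_def poly_prod_list by (simp add: comp_def algebra_simps power2_eq_square)
  ultimately show "poly ([:- (1 / c\<^sup>2), 0, 1:] ^ (2 * nV) * char_poly (arc_matrix V E (P_nb E)) ^ 2) x
      = poly ([:- (1 / c\<^sup>2), 0, 1:] ^ nA * (\<Prod>e\<leftarrow>es. [:1 / c, - (e / c), 1:]) ^ 2) x"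
    unfolding \<chi>_def by simp
qed

end

section \<open>Kemeny's constants of the arc chains through the adjacency spectrum\<close>

context regular_graph
begin

lemma kemeny_poly_edge_chain:
  assumes d: "d > 0" and es: "char_poly adj_mat = (\<Prod>e\<leftarrow>es. [:-e, 1:])"
  shows "kemeny_poly (char_poly (arc_matrix V E (P_edge E)))
    = of_nat nA - of_nat nV + (\<Sum>e\<leftarrow>es. kemeny_poly [:- (e / of_nat d), 1:])"
proof -
  define pe where "pe = char_poly (arc_matrix V E (P_edge E))"
  define fs where "fs = (\<Prod>e\<leftarrow>es. [:- (e / of_nat d), 1:])"
  have pe0: "pe \<noteq> 0" unfolding pe_def arc_matrix_edge
    by (rule char_poly_neq_zero[of _ nA]) (simp add: mult_carrier_mat[of _ nA nV])
  have fs0: "fs \<noteq> 0" unfolding fs_def by (auto simp: prod_list_zero_iff)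
  have x0: "[:0, 1:] ^ n \<noteq> (0 :: complex poly)" for n by simp
  have "kemeny_poly ([:0, 1:] ^ nV * pe) = kemeny_poly ([:0, 1:] ^ nA * fs)"
    using char_poly_edge_chain[OF d es] unfolding pe_def fs_def by simp
  then have "of_nat nV + kemeny_poly pe = of_nat nA + kemeny_poly fs"
    unfolding kemeny_poly_mult[OF x0 pe0] kemeny_poly_mult[OF x0 fs0] kemeny_poly_monom_power .
  moreover have "kemeny_poly fs = (\<Sum>e\<leftarrow>es. kemeny_poly [:- (e / of_nat d), 1:])"
    unfolding fs_def by (rule kemeny_poly_prod_list) simp
  ultimately show ?thesis unfolding pe_def by (simp add: algebra_simps)
qed

lemma kemeny_poly_nb_chain:
  assumes d: "d \<noteq> 1" and es: "char_poly adj_mat = (\<Prod>e\<leftarrow>es. [:-e, 1:])"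
  defines "c \<equiv> of_nat d - (1 :: complex)"
  shows "kemeny_poly (char_poly (arc_matrix V E (P_nb E)))
    = (of_nat nA - 2 * of_nat nV) / 2 * kemeny_poly [:- (1 / c\<^sup>2), 0, 1:]
      + (\<Sum>e\<leftarrow>es. kemeny_poly [:1 / c, - (e / c), 1:])"
proof -
  define pn where "pn = char_poly (arc_matrix V E (P_nb E))"
  define w where "w = [:- (1 / c\<^sup>2), 0, 1:]"
  define qs where "qs = (\<Prod>e\<leftarrow>es. [:1 / c, - (e / c), 1:])"
  have pn0: "pn \<noteq> 0" unfolding pn_def arc_matrix_nb by (rule char_poly_neq_zero[of _ nA]) simp
  have w0: "w \<noteq> 0" and qs0: "qs \<noteq> 0" unfolding w_def qs_def by (auto simp: prod_list_zero_iff)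
  have "kemeny_poly (w ^ (2 * nV) * pn ^ 2) = kemeny_poly (w ^ nA * qs ^ 2)"
    using char_poly_nb_chain[OF d es] unfolding pn_def w_def qs_def c_def by simp
  then have "of_nat (2 * nV) * kemeny_poly w + of_nat 2 * kemeny_poly pn
      = of_nat nA * kemeny_poly w + of_nat 2 * kemeny_poly qs"
    unfolding kemeny_poly_mult[OF power_not_zero[OF w0] power_not_zero[OF pn0]]
      kemeny_poly_mult[OF power_not_zero[OF w0] power_not_zero[OF qs0]]
      kemeny_poly_power[OF w0] kemeny_poly_power[OF pn0] kemeny_poly_power[OF qs0] .
  moreover have "kemeny_poly qs = (\<Sum>e\<leftarrow>es. kemeny_poly [:1 / c, - (e / c), 1:])"
    unfolding qs_def by (rule kemeny_poly_prod_list) simp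
  ultimately show ?thesis unfolding pn_def w_def by (simp add: field_simps)
qed

lemma kemeny_edge_spectral:
  assumes d: "d > 0"
    and spec: "char_poly adj_mat = [:- of_nat d, 1:] * (\<Prod>mu\<leftarrow>mus. [:- of_real mu, 1:])"
    and mus: "\<And>mu. mu \<in> set mus \<Longrightarrow> mu \<noteq> real d"
  shows "kemeny_edge V E = real nA - real nV + (\<Sum>mu\<leftarrow>mus. real d / (real d - mu))"
proof -
  have es: "char_poly adj_mat = (\<Prod>e\<leftarrow>of_nat d # map of_real mus. [:-e, 1:])"
    using spec by (simp add: comp_def)
  have "kemeny_poly (char_poly (arc_matrix V E (P_edge E)))
      = of_real (real nA - real nV + (\<Sum>mu\<leftarrow>mus. real d / (real d - mu)))"
    unfolding kemeny_poly_edge_chain[OF d es] using d mus kemeny_poly_linear[of 1]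
    by (simp add: kemeny_poly_edge_factor of_real_sum_list_map[symmetric] cong: map_cong)
  then show ?thesis unfolding kemeny_edge_def kemeny_eq_kemeny_poly by simp
qed

lemma kemeny_nb_spectral:
  assumes d: "d \<ge> 3"
    and spec: "char_poly adj_mat = [:- of_nat d, 1:] * (\<Prod>mu\<leftarrow>mus. [:- of_real mu, 1:])"
    and mus: "\<And>mu. mu \<in> set mus \<Longrightarrow> mu \<noteq> real d"
  shows "kemeny_nb V E = (real nA - 2 * real nV) * ((real d - 1)\<^sup>2 / (real d * (real d - 2)))
    + (real d - 1) / (real d - 2) + (\<Sum>mu\<leftarrow>mus. (2 * (real d - 1) - mu) / (real d - mu))"
proof -
  have es: "char_poly adj_mat = (\<Prod>e\<leftarrow>of_nat d # map of_real mus. [:-e, 1:])"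
    using spec by (simp add: comp_def)
  have "kemeny_poly (char_poly (arc_matrix V E (P_nb E)))
      = of_real ((real nA - 2 * real nV) * ((real d - 1)\<^sup>2 / (real d * (real d - 2)))
        + (real d - 1) / (real d - 2) + (\<Sum>mu\<leftarrow>mus. (2 * (real d - 1) - mu) / (real d - mu)))"
    using kemeny_poly_nb_chain[OF _ es] d mus
    by (simp add: kemeny_poly_nb_factors of_real_sum_list_map[symmetric] cong: map_cong)
  then show ?thesis unfolding kemeny_nb_def kemeny_eq_kemeny_poly by simp
qed

end

section \<open>The ratio of the two Kemeny constants\<close>

lemma sum_list_inverse_gaps_ge:
  fixes D :: real
  assumes D: "D > 0" and lt: "\<And>mu. mu \<in> set mus \<Longrightarrow> mu < D"
  shows "2 * length mus - (D * length mus - sum_list mus) / D \<le> (\<Sum>mu\<leftarrow>mus. D / (D - mu))"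
proof -
  have "(\<Sum>mu\<leftarrow>mus. 2 - (D - mu) / D) \<le> (\<Sum>mu\<leftarrow>mus. D / (D - mu))"
  proof (rule sum_list_mono)
    fix mu assume "mu \<in> set mus"
    define t where "t = (D - mu) / D"
    have t: "t > 0" unfolding t_def using lt[OF \<open>mu \<in> set mus\<close>] D by simp
    have "(2 - t) * t \<le> 1"
      using sum_squares_ge_zero[of "t - 1" 0] by (simp add: algebra_simps power2_eq_square)
    then have "2 - t \<le> 1 / t" using t by (simp add: field_simps)
    then show "2 - (D - mu) / D \<le> D / (D - mu)" unfolding t_def by simp
  qed
  moreover have "(\<Sum>mu\<leftarrow>mus. 2 - (D - mu) / D) = 2 * length mus - (D * length mus - sum_list mus) / D"
    using D by (induct mus) (auto simp: field_simps)
  ultimately show ?thesis by simp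
qed

text \<open>The bound rests on the identity \<open>(1 - 1/D\<^sup>2) Ke - Kn = (2 D - 1) / D\<^sup>2 * (T - n) - 1 / (D - 2)\<close>
  and on \<open>T \<ge> n - 2\<close>, which follows from \<open>1 / t \<ge> 2 - t\<close> and the trace condition.\<close>

lemma kemeny_ratio_bound:
  fixes D :: real and n :: nat
  assumes D: "D \<ge> 3" and n: "n \<ge> 1" and len: "length mus = n - 1"
    and lt: "\<And>mu. mu \<in> set mus \<Longrightarrow> mu < D" and sum: "sum_list mus = - D"
  defines "Ke \<equiv> n * (D - 1) + (\<Sum>mu\<leftarrow>mus. D / (D - mu))"
    and "Kn \<equiv> n * (D - 1)\<^sup>2 / D + (D - 1) / (D - 2) + (\<Sum>mu\<leftarrow>mus. (2 * (D - 1) - mu) / (D - mu))"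
  shows "Kn / Ke \<le> 1 - 1 / D\<^sup>2 + (2 * (2 * D - 1) / D\<^sup>2 + 1 / (D - 2)) / n"
proof -
  define T where "T = (\<Sum>mu\<leftarrow>mus. D / (D - mu))"
  define C where "C = 2 * (2 * D - 1) / D\<^sup>2 + 1 / (D - 2)"
  have lenr: "real (length mus) = real n - 1" using len n by simp
  have T: "T \<ge> real n - 2"
    using sum_list_inverse_gaps_ge[of D mus] D lt unfolding T_def by (simp add: lenr sum field_simps)
  have "(\<Sum>mu\<leftarrow>mus. (2 * (D - 1) - mu) / (D - mu)) = (\<Sum>mu\<leftarrow>mus. 1 + (D - 2) / D * (D / (D - mu)))"
    using D lt by (intro arg_cong[where f = sum_list] map_cong refl) (fastforce simp: field_simps)
  also have "\<dots> = (real n - 1) + (D - 2) / D * T"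
    unfolding T_def sum_list_addf sum_list_const_mult sum_list_triv using lenr by simp
  finally have Kn: "Kn = n * (D - 1)\<^sup>2 / D + (D - 1) / (D - 2) + (real n - 1) + (D - 2) / D * T"
    unfolding Kn_def by simp
  have Ke: "Ke = n * (D - 1) + T" unfolding Ke_def T_def ..
  have "real n * (D - 1) \<ge> real n * 2" using D by (intro mult_left_mono) auto
  then have Ke_ge: "Ke \<ge> n" using Ke T n by linarith
  have "(1 - 1 / D\<^sup>2) * Ke - Kn = (2 * D - 1) / D\<^sup>2 * (T - n) - 1 / (D - 2)"
    using D unfolding Ke Kn by (simp add: field_simps power2_eq_square)
  moreover have "(2 * D - 1) / D\<^sup>2 * (T - n) \<ge> (2 * D - 1) / D\<^sup>2 * (- 2)"
    using T D by (intro mult_left_mono) auto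
  ultimately have "Kn \<le> (1 - 1 / D\<^sup>2) * Ke + C" unfolding C_def by simp
  moreover have "Ke > 0" using Ke_ge n by linarith
  moreover have "C > 0" using D unfolding C_def by (intro add_pos_pos divide_pos_pos) auto
  ultimately have "Kn / Ke \<le> 1 - 1 / D\<^sup>2 + C / Ke" by (simp add: field_simps)
  also have "C / Ke \<le> C / n"
    using Ke_ge \<open>C > 0\<close> n by (intro divide_left_mono) auto
  finally show ?thesis unfolding C_def by simp
qed

context connected_regular_graph
begin

lemma kemeny_ratio_le:
  assumes d: "d \<ge> 3"
  shows "kemeny_nb V E / kemeny_edge V E
    \<le> 1 - 1 / (real d)\<^sup>2 + (2 * (2 * real d - 1) / (real d)\<^sup>2 + 1 / (real d - 2)) / real nV"
proof -
  obtain mus where spec: "char_poly adj_mat = [:- of_nat d, 1:] * (\<Prod>mu\<leftarrow>mus. [:- of_real mu, 1:])"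
    and len: "length mus = nV - 1" and lt: "\<And>mu. mu \<in> set mus \<Longrightarrow> mu < real d"
    and sum: "sum_list mus = - real d"
    using adjacency_spectrum by blast
  have ne: "mu \<noteq> real d" if "mu \<in> set mus" for mu using lt[OF that] by simp
  have nA: "real nA = real nV * real d" using card_arcs by simp
  have "kemeny_edge V E = real nV * (real d - 1) + (\<Sum>mu\<leftarrow>mus. real d / (real d - mu))"
    using kemeny_edge_spectral[OF _ spec ne] d unfolding nA by (simp add: algebra_simps)
  moreover have "(real nA - 2 * real nV) * ((real d - 1)\<^sup>2 / (real d * (real d - 2)))
      = real nV * (real d - 1)\<^sup>2 / real d"
    unfolding nA using d by (simp add: field_simps)
  then have "kemeny_nb V E = real nV * (real d - 1)\<^sup>2 / real d + (real d - 1) / (real d - 2)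
      + (\<Sum>mu\<leftarrow>mus. (2 * (real d - 1) - mu) / (real d - mu))"
    using kemeny_nb_spectral[OF d spec ne] by simp
  moreover have "real nV \<ge> 1" using nV_pos by simp
  ultimately show ?thesis
    using kemeny_ratio_bound[of "real d" nV mus] d len lt sum by simp
qed

end

theorem theorem3p7:
  fixes d :: nat and V :: "nat \<Rightarrow> nat set" and E :: "nat \<Rightarrow> nat \<Rightarrow> nat \<Rightarrow> bool"
  assumes "d \<ge> 3"
    and "\<And>k. simple_graph (V k) (E k)"
    and "\<And>k. connected_graph (V k) (E k)"
    and "\<And>k. regular (V k) (E k) d"
    and "filterlim (\<lambda>k. card (V k)) at_top sequentially"
  shows "limsup (\<lambda>k. ereal (kemeny_nb (V k) (E k) / kemeny_edge (V k) (E k)))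
           \<le> ereal (1 - 1 / (real d)^2)"
proof -
  define C where "C = 2 * (2 * real d - 1) / (real d)\<^sup>2 + 1 / (real d - 2)"
  define g where "g k = 1 - 1 / (real d)\<^sup>2 + C / real (card (V k))" for k
  have "connected_regular_graph (V k) (E k) d" for k
    using assms by unfold_locales auto
  then have le: "kemeny_nb (V k) (E k) / kemeny_edge (V k) (E k) \<le> g k" for k
    unfolding g_def C_def using connected_regular_graph.kemeny_ratio_le assms(1) by blast
  have "filterlim (\<lambda>k. real (card (V k))) at_top sequentially"
    by (rule filterlim_compose[OF filterlim_real_sequentially assms(5)])
  then have "(g \<longlongrightarrow> 1 - 1 / (real d)\<^sup>2 + 0) sequentially"
    unfolding g_def by (intro tendsto_add tendsto_const tendsto_divide_0[OF tendsto_const]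
        filterlim_at_top_imp_at_infinity)
  then have "limsup (\<lambda>k. ereal (g k)) = ereal (1 - 1 / (real d)\<^sup>2)"
    by (intro lim_imp_Limsup trivial_limit_sequentially) (simp add: tendsto_ereal)
  moreover have "limsup (\<lambda>k. ereal (kemeny_nb (V k) (E k) / kemeny_edge (V k) (E k)))
      \<le> limsup (\<lambda>k. ereal (g k))"
    using le by (intro Limsup_mono) auto
  ultimately show ?thesis by simp
qed

end
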